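(* Let $\mathbb{K}$ be a field of characteristic different from $2$ and let $M\in M_n(\mathbb{K})$ have a fine Frobenius decomposition $M=\sum_{i=1}^s\gamma_iA_i-\sum_{j=1}^t\frac{\alpha_j}{n_j}B_j^2+\sum_{j=1}^tB_j$. Regard matrices as acting on $\overline{\mathbb{K}}^n$. Then: (a) $M$ is semisimple, nonzero, and its mutually distinct nonzero eigenvalues are $\gamma_1,\dots,\gamma_s$, $\alpha_1\pm\sqrt{-n_1},\dots,\alpha_t\pm\sqrt{-n_t}$. (b) $\overline{\mathbb{K}}^n=[\oplus_{i=1}^s Im(A_i)]\oplus[\oplus_{j=1}^t Im(B_j)]\oplus Ker(M)$, where for all $i,j$: $Im(A_i)=Ker(M-\gamma_iI_n)$; $Im(B_j)=Ker(M-(\alpha_j+\sqrt{-n_j})I_n)\oplus Ker(M-(\alpha_j-\sqrt{-n_j})I_n)$; $Ker(M)=[\cap_{i=1}^s Ker(A_i)]\cap[\cap_{j=1}^t Ker(B_j)]$; $Ker(M-(\alpha_j+\sqrt{-n_j})I_n)=Ker(B_j-\sqrt{-n_j}I_n)$; $Ker(M-(\alpha_j-\sqrt{-n_j})I_n)=Ker(B_j+\sqrt{-n_j}I_n)$. (c) For every $i$, $A_i$ acts as the identity on $Ker(M-\gamma_iI_n)$ and as the null map on every other eigenspace of $M$; hence $A_i$ is uniquely determined by $M$. (d) For every $j$, $B_j$ acts as multiplication by $\sqrt{-n_j}$ on $Ker(M-(\alpha_j+\sqrt{-n_j})I_n)$, as multiplication by $-\sqrt{-n_j}$ on $Ker(M-(\alpha_j-\sqrt{-n_j})I_n)$,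 and as the null map on every other eigenspace of $M$; hence $B_j$ is uniquely determined by $M$. (e) For every $j$, $\lambda_j=\alpha_j+\sqrt{-n_j}$ has degree $2$ over $\mathbb{K}$ and its conjugate is $\overline{\lambda}_j=\alpha_j-\sqrt{-n_j}$; hence $\alpha_j=H_\mathbb{K}(\lambda_j)$, $n_j=-V_\mathbb{K}(\lambda_j)^2$, and $M$ has splitting bound at most $2$ over $\mathbb{K}$.
   Context: A fine Frobenius decomposition of $M\in M_n(\mathbb{K})$ is a decomposition $M=\sum_{i=1}^s\gamma_iA_i-\sum_{j=1}^t\frac{\alpha_j}{n_j}B_j^2+\sum_{j=1}^tB_j$ where $A_1,\dots,A_s,B_1,\dots,B_t$ is a non-empty family of nonzero matrices in $M_n(\mathbb{K})$ and, for all indices: $\gamma_i,\alpha_j,n_j\in\mathbb{K}$ with $\sqrt{-n_j}\notin\mathbb{K}$ ($\sqrt{-n_j}$ a fixed root in $\overline{\mathbb{K}}$ of $X^2+n_j$); $\gamma_i\neq0$ and $\gamma_i\neq\gamma_h$ for $i\ne h$; $\alpha_j+\sqrt{-n_j}\neq\alpha_l\pm\sqrt{-n_l}$ for $j\neq l$; $A_iA_h=\delta_{ih}A_i$; $A_iB_j=B_jA_i=0$; $B_jB_l=0$ for $j\ne l$; $B_j^3=-n_jB_j$. For $\lambda\in\overline{\mathbb{K}}$ whose degree over $\mathbb{K}$ is not a multiple of $char(\mathbb{K})$, with monic minimal polynomial $X^d+a_{d-1}X^{d-1}+\cdots+a_0$, $H_\mathbb{K}(\lambda)=-a_{d-1}/d$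 and $V_\mathbb{K}(\lambda)=\lambda-H_\mathbb{K}(\lambda)$. The splitting bound over $\mathbb{K}$ of $M$ is the maximum degree of the irreducible factors over $\mathbb{K}$ of its minimal polynomial. *)

theory Defs
  imports "HOL-Analysis.Analysis" "HOL-Algebra.Algebraic_Closure_Type"
begin

(* Matrices in M_n(K) are rendered as 'a^'n^'n (n = CARD('n));
   the algebraic closure of K is the type 'k alg_closure with embedding to_ac. *)

definition ext_mat :: "'k::field ^'n^'n \<Rightarrow> 'k alg_closure ^'n^'n" where
  "ext_mat M = map_matrix to_ac M"

definition scal_mat :: "'a::semiring_1 \<Rightarrow> 'a^'n^'m \<Rightarrow> 'a^'n^'m" where
  "scal_mat c M = map_matrix (\<lambda>x. c * x) M"

definition mat_pow :: "'a::semiring_1 ^'n^'n \<Rightarrow> nat \<Rightarrow> 'a^'n^'n" where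
  "mat_pow M k = (((**) M) ^^ k) (mat 1)"

definition poly_mat :: "'a::comm_ring_1 poly \<Rightarrow> 'a^'n^'n \<Rightarrow> 'a^'n^'n" where
  "poly_mat p M = (\<Sum>i\<le>Polynomial.degree p. scal_mat (Polynomial.coeff p i) (mat_pow M i))"

definition min_poly_mat :: "'a::field ^'n^'n \<Rightarrow> 'a poly" where
  "min_poly_mat M = (THE p::_ poly. Polynomial.lead_coeff p = 1 \<and> poly_mat p M = 0 \<and>
     (\<forall>q. q \<noteq> 0 \<and> poly_mat q M = 0 \<longrightarrow> Polynomial.degree p \<le> Polynomial.degree q))"

definition splitting_bound :: "'a::field ^'n^'n \<Rightarrow> nat" where
  "splitting_bound M = Max {Polynomial.degree p | p. Factorial_Ring.irreducible p \<and> p dvd min_poly_mat M}"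

definition alg_min_poly :: "'k::field alg_closure \<Rightarrow> 'k poly" where
  "alg_min_poly x = (THE p::_ poly. Polynomial.lead_coeff p = 1 \<and> poly (map_poly to_ac p) x = 0 \<and>
     (\<forall>q. q \<noteq> 0 \<and> poly (map_poly to_ac q) x = 0 \<longrightarrow> Polynomial.degree p \<le> Polynomial.degree q))"

definition alg_degree :: "'k::field alg_closure \<Rightarrow> nat" where
  "alg_degree x = Polynomial.degree (alg_min_poly x)"

definition H_K :: "'k::field alg_closure \<Rightarrow> 'k" where
  "H_K x = - Polynomial.coeff (alg_min_poly x) (alg_degree x - 1) / of_nat (alg_degree x)"

definition V_K :: "'k::field alg_closure \<Rightarrow> 'k alg_closure" where
  "V_K x = x - to_ac (H_K x)"

definition ker_mat :: "'a::semiring_1 ^'n^'m \<Rightarrow> ('a^'n) set" where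
  "ker_mat A = {v. A *v v = 0}"

definition im_mat :: "'a::semiring_1 ^'n^'m \<Rightarrow> ('a^'m) set" where
  "im_mat A = range (\<lambda>v. A *v v)"

definition is_eigenvalue :: "'a::field ^'n^'n \<Rightarrow> 'a \<Rightarrow> bool" where
  "is_eigenvalue A \<mu> \<longleftrightarrow> (\<exists>v. v \<noteq> 0 \<and> A *v v = \<mu> *s v)"

definition eigenspace :: "'a::field ^'n^'n \<Rightarrow> 'a \<Rightarrow> ('a^'n) set" where
  "eigenspace A \<mu> = ker_mat (A - mat \<mu>)"

definition diagonalizable_mat :: "'a::field ^'n^'n \<Rightarrow> bool" where
  "diagonalizable_mat A \<longleftrightarrow> (\<exists>(P::'a^'n^'n) d. invertible P \<and> A ** P = P ** (\<chi> i j. if i = j then d i else 0))"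

definition semisimple :: "'k::field ^'n^'n \<Rightarrow> bool" where
  "semisimple M \<longleftrightarrow> diagonalizable_mat (ext_mat M)"

definition is_direct_sum :: "'i set \<Rightarrow> ('i \<Rightarrow> ('a::ab_group_add) set) \<Rightarrow> 'a set \<Rightarrow> bool" where
  "is_direct_sum I W V \<longleftrightarrow> finite I \<and>
     (\<forall>f \<in> PiE I W. sum f I \<in> V) \<and>
     (\<forall>v \<in> V. \<exists>!f. f \<in> PiE I W \<and> v = sum f I)"

text \<open>Fine Frobenius decomposition with data s, gamma, A, t, alpha, nn (= n_j), r (= chosen sqrt(-n_j)), B;
  indices are i < s and j < t.\<close>
definition fine_frobenius ::
  "'k::field ^'n^'n \<Rightarrow> nat \<Rightarrow> (nat \<Rightarrow> 'k) \<Rightarrow> (nat \<Rightarrow> 'k^'n^'n) \<Rightarrow>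
   nat \<Rightarrow> (nat \<Rightarrow> 'k) \<Rightarrow> (nat \<Rightarrow> 'k) \<Rightarrow> (nat \<Rightarrow> 'k alg_closure) \<Rightarrow> (nat \<Rightarrow> 'k^'n^'n) \<Rightarrow> bool" where
  "fine_frobenius M s \<gamma> A t \<alpha> nn r B \<longleftrightarrow>
     0 < s + t \<and>
     (\<forall>i<s. A i \<noteq> 0) \<and> (\<forall>j<t. B j \<noteq> 0) \<and>
     (\<forall>j<t. r j ^ 2 = - to_ac (nn j) \<and> r j \<notin> range to_ac) \<and>
     (\<forall>i<s. \<gamma> i \<noteq> 0) \<and>
     (\<forall>i<s. \<forall>h<s. i \<noteq> h \<longrightarrow> \<gamma> i \<noteq> \<gamma> h) \<and>
     (\<forall>j<t. \<forall>l<t. j \<noteq> l \<longrightarrow>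
        to_ac (\<alpha> j) + r j \<noteq> to_ac (\<alpha> l) + r l \<and> to_ac (\<alpha> j) + r j \<noteq> to_ac (\<alpha> l) - r l) \<and>
     (\<forall>i<s. \<forall>h<s. A i ** A h = (if i = h then A i else 0)) \<and>
     (\<forall>i<s. \<forall>j<t. A i ** B j = 0 \<and> B j ** A i = 0) \<and>
     (\<forall>j<t. \<forall>l<t. j \<noteq> l \<longrightarrow> B j ** B l = 0) \<and>
     (\<forall>j<t. B j ** B j ** B j = - scal_mat (nn j) (B j)) \<and>
     M = (\<Sum>i<s. scal_mat (\<gamma> i) (A i)) - (\<Sum>j<t. scal_mat (\<alpha> j / nn j) (B j ** B j))
         + (\<Sum>j<t. B j)"

definition frob_ev :: "(nat \<Rightarrow> 'k::field) \<Rightarrow> (nat \<Rightarrow> 'k) \<Rightarrow> (nat \<Rightarrow> 'k alg_closure) \<Rightarrow>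
    nat + nat \<times> bool \<Rightarrow> 'k alg_closure" where
  "frob_ev \<gamma> \<alpha> r x = (case x of Inl i \<Rightarrow> to_ac (\<gamma> i)
       | Inr (j, b) \<Rightarrow> (if b then to_ac (\<alpha> j) + r j else to_ac (\<alpha> j) - r j))"

definition frob_space :: "'k::field ^'n^'n \<Rightarrow> (nat \<Rightarrow> 'k^'n^'n) \<Rightarrow> (nat \<Rightarrow> 'k^'n^'n) \<Rightarrow>
    (nat + nat) option \<Rightarrow> ('k alg_closure ^'n) set" where
  "frob_space M A B x = (case x of None \<Rightarrow> ker_mat (ext_mat M)
       | Some (Inl i) \<Rightarrow> im_mat (ext_mat (A i))
       | Some (Inr j) \<Rightarrow> im_mat (ext_mat (B j)))"

end

theory Submission
  imports Defs
begin

(* Over the algebraic closure the A_i are orthogonal idempotents, and B_j^3 = -n_j B_j makes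
   P_j = -B_j^2/n_j an idempotent with image Im B_j, orthogonal to the A_i and to the other P_l.
   Together with the complementary projection they split the space as
   (sum of Im A_i) + (sum of Im B_j) + Ker M.  On Im A_i the matrix M acts as gamma_i, on Im B_j as
   alpha_j + B_j with B_j^2 = -n_j, so Im B_j is the sum of the eigenspaces of B_j for the two square
   roots of -n_j.  Conversely A_i and B_j commute with M, hence act on each eigenvector of M by a
   scalar that can be read off from the eigenvalue; as the eigenvectors span, this determines A_i and
   B_j.  The field-theoretic part rests on sqrt(-n_j) not lying in K: alpha_j + sqrt(-n_j) then has
   minimal polynomial X^2 - 2 alpha_j X + alpha_j^2 + n_j, and these quadratics, together with X and
   the X - gamma_i, annihilate M. *)

section \<open>Matrices, direct sums and diagonalizability\<close>

lemma matrix_vector_mult_sum: "(A::'a::field^'n^'m) *v (\<Sum>i\<in>I. f i) = (\<Sum>i\<in>I. A *v f i)"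
  by (induction I rule: infinite_finite_induct) (auto simp: algebra_simps)

lemma sum_matrix_vector_mult: "(\<Sum>i\<in>I. (f i::'a::field^'n^'m)) *v x = (\<Sum>i\<in>I. f i *v x)"
  by (induction I rule: infinite_finite_induct) (auto simp: algebra_simps)

lemma scal_mat_matrix_vector_mult: "scal_mat c (A::'a::field^'n^'m) *v x = c *s (A *v x)"
  by (simp add: scal_mat_def matrix_vector_mult_def vec_eq_iff sum_distrib_left mult.assoc)

lemma mat_matrix_vector_mult: "mat c *v (x::'a::field^'n) = c *s x"
  by (simp add: mat_def matrix_vector_mult_def vec_eq_iff if_distrib if_distribR cong: if_cong)

lemma uminus_matrix_vector_mult: "(- A::'a::field^'n^'m) *v x = - (A *v x)"
  by (simp add: matrix_vector_mult_def vec_eq_iff sum_negf)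

lemma matrix_vector_mult_uminus: "(A::'a::field^'n^'m) *v (- x) = - (A *v x)"
  by (simp add: matrix_vector_mult_def vec_eq_iff sum_negf)

lemma eigenspace_eq: "eigenspace (A::'a::field^'n^'n) \<mu> = {v. A *v v = \<mu> *s v}"
  by (simp add: eigenspace_def ker_mat_def matrix_vector_mult_diff_rdistrib mat_matrix_vector_mult)

lemma sum_eq_single_term:
  "finite S \<Longrightarrow> j \<in> S \<Longrightarrow> (\<And>l. l \<in> S \<Longrightarrow> l \<noteq> j \<Longrightarrow> f l = 0) \<Longrightarrow> sum f S = f j"
  by (metis sum.remove sum.neutral add_0_right DiffE singletonI)

abbreviation frob_index :: "nat \<Rightarrow> nat \<Rightarrow> (nat + nat) option set" where
  "frob_index s t \<equiv> insert None (Some ` (Inl ` {..<s} \<union> Inr ` {..<t}))"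

lemma sum_frob_index:
  "sum f (frob_index s t) = f None + (\<Sum>i<s. f (Some (Inl i))) + (\<Sum>j<t. f (Some (Inr j)))"
proof -
  have "sum f (frob_index s t) = f None + sum (f \<circ> Some) (Inl ` {..<s} \<union> Inr ` {..<t})"
    by (subst sum.insert) (auto simp: sum.reindex)
  also have "\<dots> = f None + (sum (f \<circ> Some) (Inl ` {..<s}) + sum (f \<circ> Some) (Inr ` {..<t}))"
    by (subst sum.union_disjoint) auto
  finally show ?thesis
    by (simp add: sum.reindex add.assoc)
qed

lemma is_direct_sum_by_projections:
  fixes W :: "'i \<Rightarrow> 'a::ab_group_add set" and \<pi> :: "'i \<Rightarrow> 'a \<Rightarrow> 'a"
  assumes fin: "finite I"
    and sum_in: "\<And>f. f \<in> PiE I W \<Longrightarrow> sum f I \<in> V"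
    and proj_in: "\<And>k v. k \<in> I \<Longrightarrow> v \<in> V \<Longrightarrow> \<pi> k v \<in> W k"
    and proj_sum: "\<And>v. v \<in> V \<Longrightarrow> (\<Sum>k\<in>I. \<pi> k v) = v"
    and proj_add: "\<And>k x y. k \<in> I \<Longrightarrow> \<pi> k (x + y) = \<pi> k x + \<pi> k y"
    and proj_on: "\<And>k l w. k \<in> I \<Longrightarrow> l \<in> I \<Longrightarrow> w \<in> W l \<Longrightarrow> \<pi> k w = (if k = l then w else 0)"
  shows "is_direct_sum I W V"
  unfolding is_direct_sum_def
proof (intro conjI ballI)
  have proj_sum_family: "\<pi> k (sum f I) = f k" if f: "f \<in> PiE I W" and k: "k \<in> I" for f k
  proof -
    have "\<pi> k 0 = 0"
      using proj_add[OF k, of 0 0] by simp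
    then have "\<pi> k (sum f J) = (\<Sum>l\<in>J. \<pi> k (f l))" for J
      by (induction J rule: infinite_finite_induct) (simp_all add: proj_add[OF k])
    also have "(\<Sum>l\<in>I. \<pi> k (f l)) = \<pi> k (f k)"
      by (rule sum_eq_single_term) (use fin k f proj_on in \<open>auto dest: PiE_mem\<close>)
    also have "\<dots> = f k"
      using proj_on[OF k k PiE_mem[OF f k]] by simp
    finally show ?thesis .
  qed
  show "finite I" by (fact fin)
  show "sum f I \<in> V" if "f \<in> PiE I W" for f
    using sum_in that .
  show "\<exists>!f. f \<in> PiE I W \<and> v = sum f I" if v: "v \<in> V" for v
  proof (rule ex1I[of _ "restrict (\<lambda>k. \<pi> k v) I"])
    show "restrict (\<lambda>k. \<pi> k v) I \<in> PiE I W \<and> v = sum (restrict (\<lambda>k. \<pi> k v) I) I"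
      using proj_in[OF _ v] proj_sum[OF v] by simp
    show "f = restrict (\<lambda>k. \<pi> k v) I" if f: "f \<in> PiE I W \<and> v = sum f I" for f
    proof
      fix k
      show "f k = restrict (\<lambda>k. \<pi> k v) I k"
        using f proj_sum_family[of f k] PiE_arb[of f I W k] by (cases "k \<in> I") simp_all
    qed
  qed
qed

lemma diagonalizable_matI:
  fixes M :: "'a::field^'n^'n" and f :: "'n \<Rightarrow> 'a^'n"
  assumes inj: "inj f" and span: "vec.span (range f) = UNIV" and eig: "\<And>k. M *v f k = d k *s f k"
  shows "diagonalizable_mat M"
proof -
  define P :: "'a^'n^'n" where "P = (\<chi> i k. f k $ i)"
  have "y \<in> range ((*v) P)" for y
  proof -
    obtain u where "y = (\<Sum>b\<in>range f. u b *s b)"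
      using span vec.span_finite[of "range f"] by auto
    also have "\<dots> = (\<Sum>k\<in>UNIV. u (f k) *s f k)"
      by (simp add: sum.reindex[OF inj])
    also have "\<dots> = P *v (\<chi> k. u (f k))"
      by (simp add: P_def matrix_vector_mult_def vec_eq_iff mult.commute)
    finally show ?thesis
      by blast
  qed
  then have "invertible P"
    using matrix_right_invertible_surjective invertible_right_inverse by blast
  moreover have "M ** P = P ** (\<chi> i j. if i = j then d i else 0)"
  proof -
    have "(M ** P) $ i $ k = d k * f k $ i" for i k
    proof -
      have "(M ** P) $ i $ k = (M *v f k) $ i"
        by (simp add: matrix_matrix_mult_def matrix_vector_mult_def P_def)
      then show ?thesis
        by (simp add: eig)
    qed
    moreover have "(P ** (\<chi> i j. if i = j then d i else 0)) $ i $ k = d k * f k $ i" for i k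
    proof -
      have "(P ** (\<chi> i j. if i = j then d i else 0)) $ i $ k = (\<Sum>l\<in>UNIV. if l = k then f k $ i * d k else 0)"
        unfolding matrix_matrix_mult_def P_def vec_lambda_beta by (rule sum.cong) auto
      also have "\<dots> = d k * f k $ i"
        by (simp add: mult.commute)
      finally show ?thesis .
    qed
    ultimately show ?thesis
      by (simp add: vec_eq_iff)
  qed
  ultimately show ?thesis
    unfolding diagonalizable_mat_def by blast
qed

lemma diagonalizable_if_eigenvectors_span:
  fixes M :: "'a::field^'n^'n"
  assumes span: "\<And>v. v \<in> vec.span {v. \<exists>\<mu>. M *v v = \<mu> *s v}"
  shows "diagonalizable_mat M"
proof -
  let ?E = "{v. \<exists>\<mu>. M *v v = \<mu> *s v}"
  obtain Bs where Bs: "Bs \<subseteq> ?E" "vec.independent Bs" "?E \<subseteq> vec.span Bs" "card Bs = vec.dim ?E"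
    by (rule vec.basis_exists)
  have span_E: "vec.span ?E = UNIV"
    using span by auto
  have "vec.dim ?E = CARD('n)"
    using vec.dim_span[of ?E] span_E vec.dim_UNIV card_cart_basis by metis
  then obtain f where f: "bij_betw f (UNIV::'n set) Bs"
    using finite_same_card_bij[of "UNIV::'n set" Bs] vec.finiteI_independent Bs by auto
  have "vec.span (range f) = UNIV"
    using f vec.span_mono[OF Bs(3)] span_E by (auto simp: bij_betw_def vec.span_span)
  moreover have "\<exists>\<mu>. M *v f k = \<mu> *s f k" for k
    using f Bs(1) by (auto simp: bij_betw_def)
  then obtain d where "\<And>k. M *v f k = d k *s f k"
    by metis
  moreover have "inj f"
    using f by (simp add: bij_betw_def)
  ultimately show ?thesis
    using diagonalizable_matI by blast
qed

section \<open>Polynomials evaluated at matrices\<close>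

lemma scal_mat_0_left [simp]: "scal_mat 0 A = 0"
  by (simp add: scal_mat_def vec_eq_iff)

lemma scal_mat_0_right [simp]: "scal_mat c 0 = 0"
  by (simp add: scal_mat_def vec_eq_iff)

lemma scal_mat_add_left: "scal_mat (c + d) A = scal_mat c A + scal_mat d A"
  by (simp add: scal_mat_def vec_eq_iff algebra_simps)

lemma scal_mat_scal_mat: "scal_mat c (scal_mat d A) = scal_mat (c * d) A"
  by (simp add: scal_mat_def vec_eq_iff mult.assoc)

lemma scal_mat_sum: "scal_mat c (\<Sum>k\<in>S. f k) = (\<Sum>k\<in>S. scal_mat c (f k))"
  by (induction S rule: infinite_finite_induct) (auto simp: scal_mat_def vec_eq_iff algebra_simps)

lemma matrix_mult_scal_mat: "(A::'a::comm_ring_1^'n^'n) ** scal_mat c B = scal_mat c (A ** B)"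
  by (simp add: scal_mat_def vec_eq_iff matrix_matrix_mult_def sum_distrib_left mult_ac)

lemma scal_mat_matrix_mult: "scal_mat c (A::'a::comm_ring_1^'n^'n) ** B = scal_mat c (A ** B)"
  by (simp add: scal_mat_def vec_eq_iff matrix_matrix_mult_def sum_distrib_left mult_ac)

lemma matrix_add_rdistrib: "((A::'a::comm_ring_1^'n^'n) + B) ** C = A ** C + B ** C"
  by (simp add: vec_eq_iff matrix_matrix_mult_def sum.distrib algebra_simps)

lemma matrix_mult_sum: "(A::'a::comm_ring_1^'n^'n) ** (\<Sum>k\<in>S. f k) = (\<Sum>k\<in>S. A ** f k)"
  by (induction S rule: infinite_finite_induct) (auto simp: matrix_add_ldistrib)

lemma poly_mat_eq_sum_upto:
  fixes p :: "'a::comm_ring_1 poly"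
  assumes "Polynomial.degree p \<le> N"
  shows "poly_mat p M = (\<Sum>i\<le>N. scal_mat (Polynomial.coeff p i) (mat_pow M i))"
  unfolding poly_mat_def
  by (rule sum.mono_neutral_left) (use assms in \<open>auto simp: coeff_eq_0\<close>)

lemma poly_mat_0 [simp]: "poly_mat 0 M = 0"
  by (simp add: poly_mat_def)

lemma poly_mat_add: "poly_mat (p + q) M = poly_mat p M + poly_mat q M"
proof -
  let ?N = "max (Polynomial.degree p) (Polynomial.degree q)"
  have "poly_mat (p + q) M = (\<Sum>i\<le>?N. scal_mat (Polynomial.coeff (p + q) i) (mat_pow M i))"
    by (rule poly_mat_eq_sum_upto) (simp add: degree_add_le)
  also have "\<dots> = (\<Sum>i\<le>?N. scal_mat (Polynomial.coeff p i) (mat_pow M i)) + (\<Sum>i\<le>?N. scal_mat (Polynomial.coeff q i) (mat_pow M i))"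
    by (simp add: scal_mat_add_left sum.distrib)
  also have "\<dots> = poly_mat p M + poly_mat q M"
    by (simp add: poly_mat_eq_sum_upto[symmetric])
  finally show ?thesis .
qed

lemma poly_mat_smult: "poly_mat (Polynomial.smult c p) M = scal_mat c (poly_mat p M)"
proof -
  have "poly_mat (Polynomial.smult c p) M = (\<Sum>i\<le>Polynomial.degree p. scal_mat (Polynomial.coeff (Polynomial.smult c p) i) (mat_pow M i))"
    by (rule poly_mat_eq_sum_upto) (simp add: degree_smult_le)
  then show ?thesis
    by (simp add: poly_mat_def scal_mat_sum scal_mat_scal_mat)
qed

lemma poly_mat_pCons: "poly_mat (pCons a p) (M::'a::comm_ring_1^'n^'n) = scal_mat a (mat 1) + M ** poly_mat p M"
proof -
  have "poly_mat (pCons a p) M = (\<Sum>i\<le>Suc (Polynomial.degree p). scal_mat (Polynomial.coeff (pCons a p) i) (mat_pow M i))"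
    by (rule poly_mat_eq_sum_upto) (simp add: degree_pCons_le)
  also have "\<dots> = scal_mat a (mat 1) + (\<Sum>i\<le>Polynomial.degree p. scal_mat (Polynomial.coeff p i) (mat_pow M (Suc i)))"
    by (subst sum.atMost_Suc_shift) (simp add: mat_pow_def)
  also have "(\<Sum>i\<le>Polynomial.degree p. scal_mat (Polynomial.coeff p i) (mat_pow M (Suc i))) = M ** poly_mat p M"
    by (simp add: poly_mat_def matrix_mult_sum matrix_mult_scal_mat mat_pow_def)
  finally show ?thesis .
qed

lemma poly_mat_mult: "poly_mat (p * q) (M::'a::comm_ring_1^'n^'n) = poly_mat p M ** poly_mat q M"
proof (induction p rule: pCons_induct)
  case (pCons a p)
  have "poly_mat (pCons a p * q) M = scal_mat a (poly_mat q M) + M ** poly_mat (p * q) M"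
    by (simp add: poly_mat_add poly_mat_smult poly_mat_pCons)
  also have "\<dots> = (scal_mat a (mat 1) + M ** poly_mat p M) ** poly_mat q M"
    by (simp add: pCons.IH matrix_add_rdistrib scal_mat_matrix_mult matrix_mul_assoc)
  finally show ?case
    by (simp add: poly_mat_pCons)
qed simp

lemma poly_mat_diff: "poly_mat (p - q) (M::'a::comm_ring_1^'n^'n) = poly_mat p M - poly_mat q M"
proof -
  have "poly_mat (p - q) M = poly_mat (p + Polynomial.smult (-1) q) M"
    by simp
  also have "\<dots> = poly_mat p M + scal_mat (-1) (poly_mat q M)"
    by (simp only: poly_mat_add poly_mat_smult)
  finally have "poly_mat (p - q) M = poly_mat p M + scal_mat (-1) (poly_mat q M)" .
  then show ?thesis
    by (simp add: scal_mat_def vec_eq_iff)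
qed

lemma poly_mat_pCons_matrix_vector_mult:
  "poly_mat (pCons a p) (M::'a::field^'n^'n) *v x = a *s x + M *v (poly_mat p M *v x)"
  by (simp add: poly_mat_pCons matrix_vector_mult_add_rdistrib scal_mat_matrix_vector_mult matrix_vector_mul_assoc)

lemma poly_mat_dvd_matrix_vector_mult_eq_0:
  assumes "f dvd q" "poly_mat f (M::'a::field^'n^'n) *v x = 0"
  shows "poly_mat q M *v x = 0"
proof -
  obtain g where "q = g * f"
    using assms(1) by (metis dvd_def mult.commute)
  then show ?thesis
    using assms(2) by (simp add: poly_mat_mult matrix_vector_mul_assoc[symmetric])
qed

lemma The_monic_least_degree_eq:
  fixes Z :: "'a::field poly \<Rightarrow> bool"
  assumes monic: "Polynomial.lead_coeff p0 = 1" and "Z p0"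
    and least: "\<And>q. q \<noteq> 0 \<Longrightarrow> Z q \<Longrightarrow> Polynomial.degree p0 \<le> Polynomial.degree q"
    and diff: "\<And>p q. Z p \<Longrightarrow> Z q \<Longrightarrow> Z (p - q)"
  shows "(THE p. Polynomial.lead_coeff p = 1 \<and> Z p \<and> (\<forall>q. q \<noteq> 0 \<and> Z q \<longrightarrow> Polynomial.degree p \<le> Polynomial.degree q)) = p0"
proof (rule the_equality)
  show "Polynomial.lead_coeff p0 = 1 \<and> Z p0 \<and> (\<forall>q. q \<noteq> 0 \<and> Z q \<longrightarrow> Polynomial.degree p0 \<le> Polynomial.degree q)"
    using assms by blast
  fix p assume p: "Polynomial.lead_coeff p = 1 \<and> Z p \<and> (\<forall>q. q \<noteq> 0 \<and> Z q \<longrightarrow> Polynomial.degree p \<le> Polynomial.degree q)"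
  have "p \<noteq> 0" "p0 \<noteq> 0"
    using p monic by auto
  then have deg: "Polynomial.degree p = Polynomial.degree p0"
    using p least[of p] \<open>Z p0\<close> by (meson le_antisym)
  show "p = p0"
  proof (rule ccontr)
    assume "p \<noteq> p0"
    then have "p - p0 \<noteq> 0"
      by simp
    moreover have "Polynomial.coeff (p - p0) (Polynomial.degree p0) = 0"
      using p monic deg by simp
    moreover have "Polynomial.degree (p - p0) \<le> Polynomial.degree p0"
      using deg by (metis degree_diff_le le_refl)
    ultimately have "Polynomial.degree (p - p0) < Polynomial.degree p0"
      by (metis leading_coeff_0_iff le_neq_implies_less)
    with least[of "p - p0"] diff[of p p0] p \<open>Z p0\<close> \<open>p - p0 \<noteq> 0\<close> show False
      by simp
  qed
qed

lemma min_poly_mat_spec: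
  fixes M :: "'a::field^'n^'n"
  assumes "q \<noteq> 0" "poly_mat q M = 0"
  shows "Polynomial.lead_coeff (min_poly_mat M) = 1" "min_poly_mat M dvd q" "0 < Polynomial.degree (min_poly_mat M)"
proof -
  let ?P = "\<lambda>n. \<exists>g. g \<noteq> 0 \<and> poly_mat g M = 0 \<and> Polynomial.degree g = n"
  obtain n where "?P n" and below: "\<And>m. m < n \<Longrightarrow> \<not> ?P m"
    using exists_least_iff[of ?P] assms by blast
  then obtain g where g: "g \<noteq> 0" "poly_mat g M = 0" "Polynomial.degree g = n"
    by blast
  have least: "Polynomial.degree g \<le> Polynomial.degree h" if "h \<noteq> 0" "poly_mat h M = 0" for h
    using below[of "Polynomial.degree h"] that g(3) by force
  define p where "p = Polynomial.smult (1 / Polynomial.lead_coeff g) g"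
  have p: "Polynomial.lead_coeff p = 1" "poly_mat p M = 0" "Polynomial.degree p = Polynomial.degree g"
    using g(1,2) by (simp_all add: p_def poly_mat_smult)
  have "min_poly_mat M = p"
    unfolding min_poly_mat_def
    by (rule The_monic_least_degree_eq) (use p least in \<open>auto simp: poly_mat_diff\<close>)
  moreover have "p dvd q"
  proof -
    have "poly_mat (q mod p) M = poly_mat (q - q div p * p) M"
      by (simp add: minus_div_mult_eq_mod)
    then have "poly_mat (q mod p) M = 0"
      using assms(2) p(2) by (simp add: poly_mat_diff poly_mat_mult)
    moreover have "p \<noteq> 0"
      using p(1) by auto
    ultimately have "q mod p = 0"
      using least[of "q mod p"] degree_mod_less[of p q] p(3) by linarith
    then show ?thesis
      by (rule mod_0_imp_dvd)
  qed
  moreover have "0 < Polynomial.degree p"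
  proof (rule ccontr)
    assume "\<not> 0 < Polynomial.degree p"
    then have "p = [:1:]"
      using p(1) degree_0_id[of p] by simp
    then have "scal_mat 1 (mat 1) = (0::'a^'n^'n)"
      using p(2) by (simp add: poly_mat_def mat_pow_def)
    then have "(mat 1 :: 'a^'n^'n) $ i $ i = 0" for i
      by (simp add: scal_mat_def vec_eq_iff)
    then show False
      by (simp add: mat_def)
  qed
  ultimately show "Polynomial.lead_coeff (min_poly_mat M) = 1" "min_poly_mat M dvd q" "0 < Polynomial.degree (min_poly_mat M)"
    using p(1) by simp_all
qed

lemma irreducible_factor_exists:
  fixes m :: "'a::field poly"
  assumes "m \<noteq> 0" "0 < Polynomial.degree m"
  shows "\<exists>p. Factorial_Ring.irreducible p \<and> p dvd m"
  using assms
proof (induction "Polynomial.degree m" arbitrary: m rule: less_induct)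
  case less
  show ?case
  proof (cases "Factorial_Ring.irreducible m")
    case False
    moreover have "\<not> is_unit m"
      using less.prems by (simp add: is_unit_iff_degree)
    ultimately obtain a b where ab: "m = a * b" "\<not> is_unit a" "\<not> is_unit b"
      using less.prems(1) unfolding Factorial_Ring.irreducible_def by blast
    then have "a \<noteq> 0" "b \<noteq> 0" "0 < Polynomial.degree a" "0 < Polynomial.degree b"
      using less.prems(1) by (auto simp: is_unit_iff_degree)
    then have "Polynomial.degree a < Polynomial.degree m"
      using ab(1) by (simp add: degree_mult_eq)
    then obtain p where "Factorial_Ring.irreducible p" "p dvd a"
      using less.hyps \<open>a \<noteq> 0\<close> \<open>0 < Polynomial.degree a\<close> by blast
    then show ?thesis
      using ab(1) by auto
  qed auto
qed

lemma splitting_bound_le: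
  fixes M :: "'a::field^'n^'n" and f :: "'i \<Rightarrow> 'a poly"
  assumes fin: "finite I" and f: "\<And>k. k \<in> I \<Longrightarrow> f k \<noteq> 0 \<and> Polynomial.degree (f k) \<le> d"
    and ann: "poly_mat (\<Prod>k\<in>I. f k) M = 0"
  shows "splitting_bound M \<le> d"
proof -
  let ?m = "min_poly_mat M"
  let ?S = "{Polynomial.degree p | p. Factorial_Ring.irreducible p \<and> p dvd ?m}"
  have "(\<Prod>k\<in>I. f k) \<noteq> 0"
    using fin f by simp
  note m = min_poly_mat_spec[OF this ann]
  have "Polynomial.degree p \<le> d" if p: "Factorial_Ring.irreducible p" "p dvd ?m" for p
  proof -
    have prime: "prime_elem p"
      using p(1) by (rule field_poly_irreducible_imp_prime)
    have "\<exists>k\<in>J. p dvd f k" if "finite J" "p dvd (\<Prod>k\<in>J. f k)" for J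
      using that
    proof (induction J rule: finite_induct)
      case empty
      then show ?case
        using prime_elem_not_unit[OF prime] by simp
    next
      case (insert k J)
      then show ?case
        using prime_elem_dvd_mult_iff[OF prime] by auto
    qed
    then obtain k where k: "k \<in> I" "p dvd f k"
      using fin dvd_trans[OF p(2) m(2)] by blast
    then have "Polynomial.degree p \<le> Polynomial.degree (f k)"
      using f dvd_imp_degree_le by blast
    then show ?thesis
      using f[OF k(1)] by linarith
  qed
  then have sub: "?S \<subseteq> {..d}"
    by auto
  have "?m \<noteq> 0"
    using m(1) by auto
  then have "?S \<noteq> {}"
    using irreducible_factor_exists[of ?m] m(3) by blast
  moreover have "finite ?S"
    using sub finite_subset by blast
  ultimately show ?thesis
    unfolding splitting_bound_def using sub by (subst Max_le_iff) auto
qed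

section \<open>Frobenius systems\<close>

(* The factor belonging to each summand of the decomposition: X for Ker M, X - gamma_i for Im A_i,
   and the minimal polynomial of alpha_j + sqrt(-n_j) for Im B_j. *)
definition frob_factor ::
  "(nat \<Rightarrow> 'a::field) \<Rightarrow> (nat \<Rightarrow> 'a) \<Rightarrow> (nat \<Rightarrow> 'a) \<Rightarrow> (nat + nat) option \<Rightarrow> 'a poly" where
  "frob_factor \<gamma> \<alpha> nn k = (case k of None \<Rightarrow> [:0, 1:] | Some (Inl i) \<Rightarrow> [:- \<gamma> i, 1:]
     | Some (Inr j) \<Rightarrow> [:\<alpha> j ^ 2 + nn j, - 2 * \<alpha> j, 1:])"

(* The relations of a fine Frobenius decomposition acting on vectors over an arbitrary field; it is
   used both over K and over its algebraic closure. *)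
locale frobenius_system =
  fixes M :: "'a::field^'n^'n" and s :: nat and \<gamma> :: "nat \<Rightarrow> 'a" and A :: "nat \<Rightarrow> 'a^'n^'n"
    and t :: nat and \<alpha> nn :: "nat \<Rightarrow> 'a" and B :: "nat \<Rightarrow> 'a^'n^'n"
  assumes A_A: "\<And>i h x. i < s \<Longrightarrow> h < s \<Longrightarrow> A i *v (A h *v x) = (if i = h then A i *v x else 0)"
    and A_B: "\<And>i j x. i < s \<Longrightarrow> j < t \<Longrightarrow> A i *v (B j *v x) = 0"
    and B_A: "\<And>i j x. i < s \<Longrightarrow> j < t \<Longrightarrow> B j *v (A i *v x) = 0"
    and B_B: "\<And>j l x. j < t \<Longrightarrow> l < t \<Longrightarrow> j \<noteq> l \<Longrightarrow> B j *v (B l *v x) = 0"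
    and B_cube: "\<And>j x. j < t \<Longrightarrow> B j *v (B j *v (B j *v x)) = (- nn j) *s (B j *v x)"
    and nn_nonzero: "\<And>j. j < t \<Longrightarrow> nn j \<noteq> 0"
    and M_expand: "\<And>x. M *v x = (\<Sum>i<s. \<gamma> i *s (A i *v x))
      - (\<Sum>j<t. (\<alpha> j / nn j) *s (B j *v (B j *v x))) + (\<Sum>j<t. B j *v x)"
begin

lemma M_on_B_component:
  assumes j: "j < t" and A0: "\<And>i. i < s \<Longrightarrow> A i *v x = 0"
    and B0: "\<And>l. l < t \<Longrightarrow> l \<noteq> j \<Longrightarrow> B l *v x = 0"
  shows "M *v x = B j *v x - (\<alpha> j / nn j) *s (B j *v (B j *v x))"
proof -
  have "(\<Sum>l<t. (\<alpha> l / nn l) *s (B l *v (B l *v x))) = (\<alpha> j / nn j) *s (B j *v (B j *v x))"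
    by (rule sum_eq_single_term) (use j B0 in auto)
  moreover have "(\<Sum>l<t. B l *v x) = B j *v x"
    by (rule sum_eq_single_term) (use j B0 in auto)
  ultimately show ?thesis
    using A0 by (simp add: M_expand)
qed

lemma A_M_mult: assumes i: "i < s" shows "A i *v (M *v v) = \<gamma> i *s (A i *v v)"
proof -
  have "A i *v (M *v v) = (\<Sum>h<s. \<gamma> h *s (A i *v (A h *v v)))"
    using i by (simp add: M_expand matrix_vector_mult_sum vector_scalar_commute
        matrix_vector_mult_diff_distrib matrix_vector_right_distrib A_B)
  also have "\<dots> = \<gamma> i *s (A i *v v)"
    by (subst sum_eq_single_term[of _ i]) (use i in \<open>auto simp: A_A\<close>)
  finally show ?thesis .
qed

lemma M_A_mult: assumes i: "i < s" shows "M *v (A i *v w) = \<gamma> i *s (A i *v w)"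
proof -
  have "M *v (A i *v w) = (\<Sum>h<s. \<gamma> h *s (A h *v (A i *v w)))"
    using i by (simp add: M_expand B_A)
  also have "\<dots> = \<gamma> i *s (A i *v w)"
    by (subst sum_eq_single_term[of _ i]) (use i in \<open>auto simp: A_A\<close>)
  finally show ?thesis .
qed

lemma B_M_mult: assumes j: "j < t" shows "B j *v (M *v v) = \<alpha> j *s (B j *v v) + B j *v (B j *v v)"
proof -
  have "B j *v (M *v v) = B j *v (B j *v v) - (\<alpha> j / nn j) *s (B j *v (B j *v (B j *v v)))"
  proof -
    have "(\<Sum>l<t. (\<alpha> l / nn l) *s (B j *v (B l *v (B l *v v))))
        = (\<alpha> j / nn j) *s (B j *v (B j *v (B j *v v)))"
      by (rule sum_eq_single_term) (use j in \<open>auto simp: B_B\<close>)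
    moreover have "(\<Sum>l<t. B j *v (B l *v v)) = B j *v (B j *v v)"
      by (rule sum_eq_single_term) (use j in \<open>auto simp: B_B\<close>)
    ultimately show ?thesis
      using j by (simp add: M_expand matrix_vector_mult_sum vector_scalar_commute
          matrix_vector_mult_diff_distrib matrix_vector_right_distrib B_A)
  qed
  then show ?thesis
    using nn_nonzero[OF j] by (simp add: B_cube j vector_smult_assoc)
qed

lemma M_B_mult: assumes j: "j < t" shows "M *v (B j *v w) = \<alpha> j *s (B j *v w) + B j *v (B j *v w)"
proof -
  have "M *v (B j *v w) = B j *v (B j *v w) - (\<alpha> j / nn j) *s (B j *v (B j *v (B j *v w)))"
    by (rule M_on_B_component[OF j]) (use j in \<open>simp_all add: A_B B_B\<close>)
  then show ?thesis
    using nn_nonzero[OF j] by (simp add: B_cube j vector_smult_assoc)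
qed

lemma A_eigenvector_other:
  assumes e: "M *v v = \<mu> *s v" and i: "i < s" and ne: "\<mu> \<noteq> \<gamma> i"
  shows "A i *v v = 0"
proof -
  have "\<gamma> i *s (A i *v v) = A i *v (M *v v)"
    using A_M_mult[OF i] by simp
  also have "\<dots> = \<mu> *s (A i *v v)"
    by (simp add: e vector_scalar_commute)
  finally have "\<gamma> i *s (A i *v v) = \<mu> *s (A i *v v)" .
  then have "(\<gamma> i - \<mu>) *s (A i *v v) = 0"
    by (simp only: vector_sub_rdistrib right_minus_eq)
  with ne show ?thesis
    by auto
qed

lemma B_eigenvector_other:
  assumes e: "M *v v = \<mu> *s v" and j: "j < t" and ne: "(\<mu> - \<alpha> j) ^ 2 + nn j \<noteq> 0"
  shows "B j *v v = 0"
proof -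
  define w where "w = B j *v v"
  have Bw: "B j *v w = (\<mu> - \<alpha> j) *s w"
    using B_M_mult[OF j, of v] e unfolding w_def by (simp add: vector_scalar_commute vector_sub_rdistrib)
  have "B j *v (B j *v w) = (- nn j) *s w"
    unfolding w_def by (rule B_cube[OF j])
  moreover have "B j *v (B j *v w) = ((\<mu> - \<alpha> j) ^ 2) *s w"
    by (simp only: Bw vector_scalar_commute vector_smult_assoc power2_eq_square)
  ultimately have "((\<mu> - \<alpha> j) ^ 2 + nn j) *s w = 0"
    by (simp add: vector_sadd_rdistrib)
  with ne show ?thesis
    unfolding w_def by (simp only: vector_mul_eq_0) blast
qed

lemma A_eigenvector_self:
  assumes e: "M *v v = \<gamma> i *s v" and i: "i < s" and nz: "\<gamma> i \<noteq> 0"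
    and A0: "\<And>h. h < s \<Longrightarrow> h \<noteq> i \<Longrightarrow> A h *v v = 0" and B0: "\<And>j. j < t \<Longrightarrow> B j *v v = 0"
  shows "A i *v v = v"
proof -
  have "M *v v = (\<Sum>h<s. \<gamma> h *s (A h *v v))"
    by (simp add: M_expand B0)
  also have "\<dots> = \<gamma> i *s (A i *v v)"
    by (rule sum_eq_single_term) (use i A0 in auto)
  finally show ?thesis
    using e nz by simp
qed

(* Killed by all other summands, an eigenvector sees M as B_j - (alpha_j/n_j) B_j^2, and B_j w = rho w
   for w = B_j v; comparing both expressions for M v gives B_j v = rho v. *)
lemma B_eigenvector_root:
  assumes e: "M *v v = (\<alpha> j + \<rho>) *s v" and j: "j < t" and \<rho>: "\<rho> ^ 2 = - nn j" and nz: "\<alpha> j + \<rho> \<noteq> 0"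
    and A0: "\<And>i. i < s \<Longrightarrow> A i *v v = 0" and B0: "\<And>l. l < t \<Longrightarrow> l \<noteq> j \<Longrightarrow> B l *v v = 0"
  shows "B j *v v = \<rho> *s v"
proof -
  have \<rho>0: "\<rho> \<noteq> 0"
    using \<rho> nn_nonzero[OF j] by auto
  define w where "w = B j *v v"
  have Bw: "B j *v w = \<rho> *s w"
    using B_M_mult[OF j, of v] e unfolding w_def by (simp add: vector_scalar_commute algebra_simps vector_sadd_rdistrib)
  have "nn j = - (\<rho> * \<rho>)"
    using \<rho> by (simp add: power2_eq_square)
  then have "1 - \<alpha> j / nn j * \<rho> = (\<alpha> j + \<rho>) / \<rho>"
    using \<rho>0 by (simp add: field_simps)
  moreover have "M *v v = (1 - \<alpha> j / nn j * \<rho>) *s w"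
    using M_on_B_component[OF j A0 B0] Bw unfolding w_def[symmetric]
    by (simp add: vector_smult_assoc vector_sub_rdistrib)
  ultimately have eq: "(\<alpha> j + \<rho>) *s v = ((\<alpha> j + \<rho>) / \<rho>) *s w"
    using e by metis
  have "\<rho> / (\<alpha> j + \<rho>) * (\<alpha> j + \<rho>) = \<rho>" "\<rho> / (\<alpha> j + \<rho>) * ((\<alpha> j + \<rho>) / \<rho>) = 1"
    using nz \<rho>0 by simp_all
  then have "\<rho> *s v = (\<rho> / (\<alpha> j + \<rho>)) *s ((\<alpha> j + \<rho>) *s v)"
    "(\<rho> / (\<alpha> j + \<rho>)) *s (((\<alpha> j + \<rho>) / \<rho>) *s w) = w"
    by (simp_all only: vector_smult_assoc vector_smult_lid)
  then have "\<rho> *s v = w"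
    by (simp only: eq)
  then show ?thesis
    unfolding w_def by simp
qed

lemma B_eigenvector_in_im:
  assumes "B j *v x = \<rho> *s x" and "\<rho> \<noteq> 0"
  shows "x \<in> im_mat (B j)"
proof -
  have "x = B j *v ((1 / \<rho>) *s x)"
    using assms by (simp add: vector_scalar_commute vector_smult_assoc)
  then show ?thesis
    unfolding im_mat_def by blast
qed

lemma M_eigenvector_of_B_eigenvector:
  assumes j: "j < t" and \<rho>: "\<rho> ^ 2 = - nn j" and x: "B j *v x = \<rho> *s x"
  shows "M *v x = (\<alpha> j + \<rho>) *s x"
proof -
  have "\<rho> \<noteq> 0"
    using \<rho> nn_nonzero[OF j] by auto
  then obtain u where u: "x = B j *v u"
    using B_eigenvector_in_im[OF x] by (auto simp: im_mat_def)
  have "M *v x = B j *v x - (\<alpha> j / nn j) *s (B j *v (B j *v x))"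
    by (rule M_on_B_component[OF j]) (use j in \<open>simp_all add: u A_B B_B\<close>)
  also have "\<dots> = (\<rho> - \<alpha> j / nn j * (\<rho> * \<rho>)) *s x"
    by (simp add: x vector_scalar_commute vector_smult_assoc vector_sub_rdistrib)
  also have "\<rho> - \<alpha> j / nn j * (\<rho> * \<rho>) = \<alpha> j + \<rho>"
    using \<rho> nn_nonzero[OF j] by (simp add: power2_eq_square[symmetric])
  finally show ?thesis .
qed

(* Idempotent with image Im B_j, because B_j^3 = -n_j B_j. *)
definition B_proj :: "nat \<Rightarrow> 'a^'n \<Rightarrow> 'a^'n" where
  "B_proj j v = (- 1 / nn j) *s (B j *v (B j *v v))"

definition ker_proj :: "'a^'n \<Rightarrow> 'a^'n" where
  "ker_proj v = v - (\<Sum>i<s. A i *v v) - (\<Sum>j<t. B_proj j v)"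

definition component_proj :: "(nat + nat) option \<Rightarrow> 'a^'n \<Rightarrow> 'a^'n" where
  "component_proj k v = (case k of None \<Rightarrow> ker_proj v | Some (Inl i) \<Rightarrow> A i *v v
     | Some (Inr j) \<Rightarrow> B_proj j v)"

definition component_space :: "(nat + nat) option \<Rightarrow> ('a^'n) set" where
  "component_space k = (case k of None \<Rightarrow> ker_mat M | Some (Inl i) \<Rightarrow> im_mat (A i)
     | Some (Inr j) \<Rightarrow> im_mat (B j))"

lemma B_proj_add: "B_proj j (x + y) = B_proj j x + B_proj j y"
  by (simp add: B_proj_def matrix_vector_right_distrib vector_add_ldistrib)

lemma A_B_proj: "i < s \<Longrightarrow> j < t \<Longrightarrow> A i *v B_proj j v = 0"
  by (simp add: B_proj_def vector_scalar_commute matrix_vector_mult_uminus A_B)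

lemma B_B_proj: "l < t \<Longrightarrow> j < t \<Longrightarrow> B l *v B_proj j v = (if l = j then B j *v v else 0)"
  using nn_nonzero[of j]
  by (auto simp: B_proj_def vector_scalar_commute matrix_vector_mult_uminus B_B B_cube vector_smult_assoc)

lemma B_proj_A: "i < s \<Longrightarrow> j < t \<Longrightarrow> B_proj j (A i *v u) = 0"
  by (simp add: B_proj_def B_A)

lemma B_proj_B: "j < t \<Longrightarrow> l < t \<Longrightarrow> B_proj j (B l *v u) = (if j = l then B l *v u else 0)"
  using nn_nonzero[of j] by (auto simp: B_proj_def B_B B_cube vector_smult_assoc)

lemma B_proj_eigenvector:
  assumes "j < t" "\<rho> ^ 2 = - nn j" "B j *v x = \<rho> *s x"
  shows "B_proj j x = x"
proof -
  have "\<rho> \<noteq> 0" "nn j = - (\<rho> * \<rho>)"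
    using assms nn_nonzero[of j] by (auto simp: power2_eq_square)
  then show ?thesis
    using assms(3) by (simp add: B_proj_def vector_scalar_commute vector_smult_assoc)
qed

lemma ker_proj_add: "ker_proj (x + y) = ker_proj x + ker_proj y"
  by (simp add: ker_proj_def B_proj_add matrix_vector_right_distrib sum.distrib algebra_simps)

lemma A_ker_proj: assumes i: "i < s" shows "A i *v ker_proj v = 0"
proof -
  have "(\<Sum>h<s. A i *v (A h *v v)) = A i *v v"
    by (subst sum_eq_single_term[of _ i]) (use i in \<open>auto simp: A_A\<close>)
  then show ?thesis
    using i by (simp add: ker_proj_def matrix_vector_mult_diff_distrib matrix_vector_mult_sum A_B_proj)
qed

lemma B_ker_proj: assumes j: "j < t" shows "B j *v ker_proj v = 0"
proof -
  have "(\<Sum>l<t. B j *v B_proj l v) = B j *v v"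
    by (subst sum_eq_single_term[of _ j]) (use j in \<open>auto simp: B_B_proj\<close>)
  then show ?thesis
    using j by (simp add: ker_proj_def matrix_vector_mult_diff_distrib matrix_vector_mult_sum B_A)
qed

lemma M_ker_proj: "M *v ker_proj v = 0"
  by (simp add: M_expand A_ker_proj B_ker_proj)

lemma ker_proj_A: assumes i: "i < s" shows "ker_proj (A i *v u) = 0"
proof -
  have "(\<Sum>h<s. A h *v (A i *v u)) = A i *v u"
    by (subst sum_eq_single_term[of _ i]) (use i in \<open>auto simp: A_A\<close>)
  then show ?thesis
    using i by (simp add: ker_proj_def B_proj_A)
qed

lemma ker_proj_B: assumes j: "j < t" shows "ker_proj (B j *v u) = 0"
proof -
  have "(\<Sum>l<t. B_proj l (B j *v u)) = B j *v u"
    by (subst sum_eq_single_term[of _ j]) (use j in \<open>auto simp: B_proj_B\<close>)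
  then show ?thesis
    using j by (simp add: ker_proj_def A_B)
qed

lemma sum_component_proj: "(\<Sum>k\<in>frob_index s t. component_proj k v) = v"
  by (simp add: sum_frob_index component_proj_def ker_proj_def)

lemma component_proj_add: "component_proj k (x + y) = component_proj k x + component_proj k y"
  by (simp add: component_proj_def ker_proj_add B_proj_add matrix_vector_right_distrib split: option.split sum.split)

lemma component_proj_in_component_space: "component_proj k v \<in> component_space k"
proof -
  have "B_proj j v \<in> im_mat (B j)" for j
    unfolding B_proj_def im_mat_def
    by (rule range_eqI[of _ _ "(- 1 / nn j) *s (B j *v v)"]) (simp add: vector_scalar_commute matrix_vector_mult_uminus)
  then show ?thesis
    by (auto simp: component_proj_def component_space_def ker_mat_def im_mat_def M_ker_proj
        split: option.split sum.split)
qed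

lemma M_B_proj: assumes j: "j < t" shows "M *v B_proj j v = \<alpha> j *s B_proj j v + B j *v v"
proof -
  have "M *v B_proj j v = (- 1 / nn j) *s (\<alpha> j *s (B j *v (B j *v v)) + B j *v (B j *v (B j *v v)))"
    unfolding B_proj_def by (simp only: vector_scalar_commute M_B_mult[OF j])
  also have "\<dots> = \<alpha> j *s B_proj j v + B j *v v"
    using nn_nonzero[OF j] by (simp add: B_proj_def B_cube[OF j] vector_add_ldistrib vector_smult_assoc mult.commute)
  finally show ?thesis .
qed

lemma M_B_mult_via_B_proj: assumes j: "j < t" shows "M *v (B j *v v) = \<alpha> j *s (B j *v v) - nn j *s B_proj j v"
  using nn_nonzero[of j] j by (simp add: M_B_mult B_proj_def vector_smult_assoc)

lemma frob_factor_kills_component: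
  assumes k: "k \<in> frob_index s t"
  shows "poly_mat (frob_factor \<gamma> \<alpha> nn k) M *v component_proj k v = 0"
proof -
  consider "k = None" | i where "i < s" "k = Some (Inl i)" | j where "j < t" "k = Some (Inr j)"
    using k by blast
  then show ?thesis
  proof cases
    case 1
    then show ?thesis
      by (simp add: frob_factor_def component_proj_def poly_mat_pCons_matrix_vector_mult M_ker_proj)
  next
    case (2 i)
    then show ?thesis
      by (simp add: frob_factor_def component_proj_def poly_mat_pCons_matrix_vector_mult M_A_mult)
  next
    case (3 j)
    let ?x = "B_proj j v" and ?y = "B j *v v"
    have "poly_mat [:\<alpha> j ^ 2 + nn j, - 2 * \<alpha> j, 1:] M *v ?x
       = (\<alpha> j ^ 2 + nn j) *s ?x + M *v ((- 2 * \<alpha> j) *s ?x + M *v ?x)"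
      by (simp only: poly_mat_pCons_matrix_vector_mult poly_mat_0 matrix_vector_mult_0
          matrix_vector_mult_0_right add_0_right vector_smult_lid)
    also have "\<dots> = (\<alpha> j ^ 2 + nn j) *s ?x + ((- 2 * \<alpha> j) *s (\<alpha> j *s ?x + ?y) +
          (\<alpha> j *s (\<alpha> j *s ?x + ?y) + (\<alpha> j *s ?y - nn j *s ?x)))"
      by (simp only: matrix_vector_right_distrib vector_scalar_commute M_B_proj[OF 3(1)] M_B_mult_via_B_proj[OF 3(1)])
    also have "\<dots> = 0"
      by (simp add: vec_eq_iff power2_eq_square algebra_simps)
    finally show ?thesis
      using 3 by (simp add: frob_factor_def component_proj_def)
  qed
qed

lemma frob_annihilator: "poly_mat (\<Prod>k\<in>frob_index s t. frob_factor \<gamma> \<alpha> nn k) M = 0"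
proof -
  let ?q = "\<Prod>k\<in>frob_index s t. frob_factor \<gamma> \<alpha> nn k"
  have "poly_mat ?q M *v component_proj k v = 0" if k: "k \<in> frob_index s t" for k v
  proof (rule poly_mat_dvd_matrix_vector_mult_eq_0)
    show "frob_factor \<gamma> \<alpha> nn k dvd ?q"
      using k by (intro dvd_prodI) auto
  qed (rule frob_factor_kills_component[OF k])
  then have "poly_mat ?q M *v v = 0" for v
    using sum_component_proj[of v] by (metis (no_types, lifting) matrix_vector_mult_sum sum.neutral)
  then show ?thesis
    by (simp add: matrix_eq)
qed

(* For rho^2 = -n_j, the map (B_j + rho) B_proj_j / (2 rho) projects Im B_j onto the rho-eigenspace
   of B_j along the (-rho)-eigenspace. *)
definition B_eigen_part :: "nat \<Rightarrow> 'a \<Rightarrow> 'a^'n \<Rightarrow> 'a^'n" where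
  "B_eigen_part j \<rho> v = (1 / (2 * \<rho>)) *s (B j *v v + \<rho> *s B_proj j v)"

lemma B_eigen_part_add: "B_eigen_part j \<rho> (x + y) = B_eigen_part j \<rho> x + B_eigen_part j \<rho> y"
  by (simp add: B_eigen_part_def B_proj_add matrix_vector_right_distrib algebra_simps)

lemma B_B_eigen_part:
  assumes j: "j < t" and \<rho>: "\<rho> ^ 2 = - nn j"
  shows "B j *v B_eigen_part j \<rho> v = \<rho> *s B_eigen_part j \<rho> v"
proof -
  have sq: "\<rho> * \<rho> = - nn j"
    using \<rho> by (simp add: power2_eq_square)
  have "\<rho> *s (\<rho> *s B_proj j v) = (- nn j * (- 1 / nn j)) *s (B j *v (B j *v v))"
    by (simp only: B_proj_def vector_smult_assoc sq mult.assoc[symmetric])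
  then have "B j *v (B j *v v) = \<rho> *s (\<rho> *s B_proj j v)"
    using nn_nonzero[OF j] by simp
  then have "B j *v (B j *v v + \<rho> *s B_proj j v) = \<rho> *s (B j *v v + \<rho> *s B_proj j v)"
    using B_B_proj[OF j j] by (simp add: matrix_vector_right_distrib vector_scalar_commute vector_add_ldistrib add.commute)
  then show ?thesis
    unfolding B_eigen_part_def by (simp only: vector_scalar_commute vector_smult_assoc mult.commute)
qed

end

section \<open>Eigenspaces of a Frobenius system\<close>

locale frobenius_roots = frobenius_system +
  fixes r :: "nat \<Rightarrow> 'a"
  assumes r_square: "\<And>j. j < t \<Longrightarrow> r j ^ 2 = - nn j"
    and two_nonzero: "(2::'a) \<noteq> 0"
    and gamma_nonzero: "\<And>i. i < s \<Longrightarrow> \<gamma> i \<noteq> 0"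
    and gamma_distinct: "\<And>i h. i < s \<Longrightarrow> h < s \<Longrightarrow> i \<noteq> h \<Longrightarrow> \<gamma> i \<noteq> \<gamma> h"
    and gamma_ne_plus: "\<And>i j. i < s \<Longrightarrow> j < t \<Longrightarrow> \<gamma> i \<noteq> \<alpha> j + r j"
    and gamma_ne_minus: "\<And>i j. i < s \<Longrightarrow> j < t \<Longrightarrow> \<gamma> i \<noteq> \<alpha> j - r j"
    and plus_nonzero: "\<And>j. j < t \<Longrightarrow> \<alpha> j + r j \<noteq> 0"
    and minus_nonzero: "\<And>j. j < t \<Longrightarrow> \<alpha> j - r j \<noteq> 0"
    and plus_ne_plus: "\<And>j l. j < t \<Longrightarrow> l < t \<Longrightarrow> j \<noteq> l \<Longrightarrow> \<alpha> j + r j \<noteq> \<alpha> l + r l"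
    and plus_ne_minus: "\<And>j l. j < t \<Longrightarrow> l < t \<Longrightarrow> j \<noteq> l \<Longrightarrow> \<alpha> j + r j \<noteq> \<alpha> l - r l"
    and minus_ne_minus: "\<And>j l. j < t \<Longrightarrow> l < t \<Longrightarrow> j \<noteq> l \<Longrightarrow> \<alpha> j - r j \<noteq> \<alpha> l - r l"
begin

lemma r_nonzero: "j < t \<Longrightarrow> r j \<noteq> 0"
  using r_square nn_nonzero by fastforce

lemma plus_ne_minus_self: assumes j: "j < t" shows "\<alpha> j + r j \<noteq> \<alpha> j - r j"
proof
  assume "\<alpha> j + r j = \<alpha> j - r j"
  then have "2 * r j = 0"
    by (simp add: algebra_simps)
  with two_nonzero r_nonzero[OF j] show False
    by simp
qed

lemma neg_r_square: "j < t \<Longrightarrow> (- r j) ^ 2 = - nn j"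
  by (simp add: r_square)

lemma B_eigenvector_nonroot:
  assumes e: "M *v v = \<mu> *s v" and j: "j < t" and "\<mu> \<noteq> \<alpha> j + r j" "\<mu> \<noteq> \<alpha> j - r j"
  shows "B j *v v = 0"
proof (rule B_eigenvector_other[OF e j])
  have "(\<mu> - \<alpha> j) ^ 2 + nn j = (\<mu> - (\<alpha> j + r j)) * (\<mu> - (\<alpha> j - r j))"
    using r_square[OF j] by (simp add: algebra_simps power2_eq_square)
  then show "(\<mu> - \<alpha> j) ^ 2 + nn j \<noteq> 0"
    using assms(3,4) by simp
qed

lemma A_eigenvector:
  assumes e: "M *v v = \<mu> *s v" and i: "i < s"
  shows "A i *v v = (if \<mu> = \<gamma> i then v else 0)"
proof (cases "\<mu> = \<gamma> i")
  case True
  have "A i *v v = v"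
  proof (rule A_eigenvector_self[OF _ i gamma_nonzero[OF i]])
    show "M *v v = \<gamma> i *s v"
      using e True by simp
    show "A h *v v = 0" if "h < s" "h \<noteq> i" for h
      using A_eigenvector_other[OF e that(1)] gamma_distinct[OF that(1) i that(2)] True by simp
    show "B j *v v = 0" if "j < t" for j
      using B_eigenvector_nonroot[OF e that] gamma_ne_plus[OF i that] gamma_ne_minus[OF i that] True by simp
  qed
  with True show ?thesis
    by simp
qed (simp add: A_eigenvector_other[OF e i])

lemma B_eigenvector:
  assumes e: "M *v v = \<mu> *s v" and j: "j < t"
  shows "B j *v v = (if \<mu> = \<alpha> j + r j then r j *s v else if \<mu> = \<alpha> j - r j then (- r j) *s v else 0)"
proof -
  have A0: "A i *v v = 0" if root: "\<mu> = \<alpha> j + r j \<or> \<mu> = \<alpha> j - r j" and i: "i < s" for i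
  proof (rule A_eigenvector_other[OF e i])
    show "\<mu> \<noteq> \<gamma> i"
      using root gamma_ne_plus[OF i j] gamma_ne_minus[OF i j] by auto
  qed
  have B0: "B l *v v = 0" if root: "\<mu> = \<alpha> j + r j \<or> \<mu> = \<alpha> j - r j" and l: "l < t" "l \<noteq> j" for l
  proof (rule B_eigenvector_nonroot[OF e l(1)])
    show "\<mu> \<noteq> \<alpha> l + r l" "\<mu> \<noteq> \<alpha> l - r l"
      using root plus_ne_plus[OF j l(1) l(2)[symmetric]] plus_ne_minus[OF j l(1) l(2)[symmetric]]
        plus_ne_minus[OF l(1) j l(2)] minus_ne_minus[OF j l(1) l(2)[symmetric]] by auto
  qed
  consider "\<mu> = \<alpha> j + r j" | "\<mu> = \<alpha> j - r j" | "\<mu> \<noteq> \<alpha> j + r j" "\<mu> \<noteq> \<alpha> j - r j"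
    by blast
  then show ?thesis
  proof cases
    case 1
    then show ?thesis
      using B_eigenvector_root[OF _ j r_square[OF j] plus_nonzero[OF j]] e A0 B0 by simp
  next
    case 2
    then have "B j *v v = (- r j) *s v"
      using B_eigenvector_root[OF _ j neg_r_square[OF j], of v] minus_nonzero[OF j] e A0 B0 by simp
    with 2 plus_ne_minus_self[OF j] show ?thesis
      by simp
  qed (simp add: B_eigenvector_nonroot[OF e j])
qed

lemma M_mult_eq_0_iff: "M *v x = 0 \<longleftrightarrow> (\<forall>i<s. A i *v x = 0) \<and> (\<forall>j<t. B j *v x = 0)"
proof
  assume "M *v x = 0"
  then have e: "M *v x = 0 *s x"
    by simp
  have "A i *v x = 0" if "i < s" for i
    using A_eigenvector[OF e that] gamma_nonzero[OF that] by (cases "0 = \<gamma> i") auto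
  moreover have "B j *v x = 0" if "j < t" for j
    using B_eigenvector[OF e that] plus_nonzero[OF that] minus_nonzero[OF that]
    by (cases "0 = \<alpha> j + r j"; cases "0 = \<alpha> j - r j") auto
  ultimately show "(\<forall>i<s. A i *v x = 0) \<and> (\<forall>j<t. B j *v x = 0)"
    by blast
qed (simp add: M_expand)

lemma ker_M_eq_Inter: "ker_mat M = (\<Inter>i\<in>{..<s}. ker_mat (A i)) \<inter> (\<Inter>j\<in>{..<t}. ker_mat (B j))"
  by (auto simp: ker_mat_def M_mult_eq_0_iff)

lemma im_A_eq_eigenspace:
  assumes i: "i < s"
  shows "im_mat (A i) = eigenspace M (\<gamma> i)"
proof (intro equalityI subsetI)
  fix v assume "v \<in> im_mat (A i)"
  then show "v \<in> eigenspace M (\<gamma> i)"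
    using M_A_mult[OF i] by (auto simp: im_mat_def eigenspace_eq)
next
  fix v assume "v \<in> eigenspace M (\<gamma> i)"
  then have "A i *v v = v"
    using A_eigenvector[of v "\<gamma> i" i] i by (simp add: eigenspace_eq)
  then show "v \<in> im_mat (A i)"
    unfolding im_mat_def by (metis rangeI)
qed

lemma eigenspace_root_eq:
  assumes j: "j < t" and \<rho>: "\<rho> = r j \<or> \<rho> = - r j"
  shows "eigenspace M (\<alpha> j + \<rho>) = {x. B j *v x = \<rho> *s x}"
proof (intro equalityI subsetI)
  fix x assume "x \<in> eigenspace M (\<alpha> j + \<rho>)"
  then show "x \<in> {x. B j *v x = \<rho> *s x}"
    using B_eigenvector[of x "\<alpha> j + \<rho>", OF _ j] \<rho> plus_ne_minus_self[OF j] by (auto simp: eigenspace_eq)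
next
  have "\<rho> ^ 2 = - nn j"
    using \<rho> r_square[OF j] by auto
  then show "x \<in> eigenspace M (\<alpha> j + \<rho>)" if "x \<in> {x. B j *v x = \<rho> *s x}" for x
    using that M_eigenvector_of_B_eigenvector[OF j] by (simp add: eigenspace_eq)
qed

lemma eigenspace_plus_eq: "j < t \<Longrightarrow> eigenspace M (\<alpha> j + r j) = ker_mat (B j - mat (r j))"
  by (simp add: eigenspace_root_eq ker_mat_def matrix_vector_mult_diff_rdistrib mat_matrix_vector_mult)

lemma eigenspace_minus_eq: "j < t \<Longrightarrow> eigenspace M (\<alpha> j - r j) = ker_mat (B j + mat (r j))"
  using eigenspace_root_eq[of j "- r j"]
  by (simp add: ker_mat_def matrix_vector_mult_add_rdistrib mat_matrix_vector_mult vector_smult_lneg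
      eq_neg_iff_add_eq_0)

lemma B_eigen_part_pair:
  assumes j: "j < t" and \<rho>: "\<rho> ^ 2 = - nn j"
  shows "B_eigen_part j \<rho> v + B_eigen_part j (- \<rho>) v = B_proj j v"
proof -
  have "\<rho> \<noteq> 0"
    using \<rho> nn_nonzero[OF j] by auto
  then show ?thesis
    using two_nonzero by (simp add: B_eigen_part_def vec_eq_iff field_simps)
qed

lemma B_eigen_part_eigenvector:
  assumes j: "j < t" and \<rho>: "\<rho> ^ 2 = - nn j" and x: "B j *v x = \<rho> *s x"
  shows "B_eigen_part j \<rho> x = x" "B_eigen_part j (- \<rho>) x = 0"
proof -
  have "\<rho> \<noteq> 0"
    using \<rho> nn_nonzero[OF j] by auto
  then show "B_eigen_part j \<rho> x = x" "B_eigen_part j (- \<rho>) x = 0"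
    using two_nonzero B_proj_eigenvector[OF j \<rho> x] x
    by (simp_all add: B_eigen_part_def vec_eq_iff field_simps)
qed

lemma im_B_direct_sum:
  assumes j: "j < t"
  shows "is_direct_sum (UNIV :: bool set) (\<lambda>b. eigenspace M (if b then \<alpha> j + r j else \<alpha> j - r j)) (im_mat (B j))"
proof (rule is_direct_sum_by_projections[where \<pi> = "\<lambda>b. B_eigen_part j (if b then r j else - r j)"])
  let ?W = "\<lambda>b. eigenspace M (if b then \<alpha> j + r j else \<alpha> j - r j)"
  have W_eq: "?W b = {x. B j *v x = (if b then r j else - r j) *s x}" for b
    using eigenspace_root_eq[OF j, of "r j"] eigenspace_root_eq[OF j, of "- r j"] by (cases b) simp_all
  have sq: "(if b then r j else - r j) ^ 2 = - nn j" for b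
    by (simp add: r_square[OF j])
  have nz: "(if b then r j else - r j) \<noteq> 0" for b
    using r_nonzero[OF j] by simp
  show "finite (UNIV :: bool set)"
    by simp
  show "sum f UNIV \<in> im_mat (B j)" if "f \<in> PiE UNIV ?W" for f
  proof -
    have "f b \<in> im_mat (B j)" for b
      using PiE_mem[OF that, of b] B_eigenvector_in_im[OF _ nz] by (auto simp: W_eq)
    then obtain u u' where "f True = B j *v u" "f False = B j *v u'"
      unfolding im_mat_def by (meson rangeE)
    then have "sum f UNIV = B j *v (u + u')"
      by (simp add: UNIV_bool matrix_vector_right_distrib add.commute)
    then show ?thesis
      by (simp add: im_mat_def)
  qed
  show "B_eigen_part j (if b then r j else - r j) v \<in> ?W b" for b v
    using B_B_eigen_part[OF j sq] by (simp add: W_eq)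
  show "(\<Sum>b\<in>UNIV. B_eigen_part j (if b then r j else - r j) v) = v" if v: "v \<in> im_mat (B j)" for v
  proof -
    obtain u where "v = B j *v u"
      using v by (auto simp: im_mat_def)
    then have "B_eigen_part j (r j) v + B_eigen_part j (- r j) v = v"
      using B_eigen_part_pair[OF j r_square[OF j]] B_proj_B[OF j j] by simp
    then show ?thesis
      by (simp add: UNIV_bool add.commute)
  qed
  show "B_eigen_part j (if b then r j else - r j) (x + y)
      = B_eigen_part j (if b then r j else - r j) x + B_eigen_part j (if b then r j else - r j) y" for b x y
    by (rule B_eigen_part_add)
  show "B_eigen_part j (if b then r j else - r j) w = (if b = b' then w else 0)" if "w \<in> ?W b'" for b b' w
  proof -
    have "B j *v w = (if b' then r j else - r j) *s w"
      using that unfolding W_eq by simp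
    then show ?thesis
      using B_eigen_part_eigenvector[OF j sq[of b']] by (cases b; cases b') auto
  qed
qed

lemma component_proj_on_component:
  assumes k: "k \<in> frob_index s t" and l: "l \<in> frob_index s t" and w: "w \<in> component_space l"
  shows "component_proj k w = (if k = l then w else 0)"
proof -
  consider (ker) "l = None" "M *v w = 0" | (A) h u where "h < s" "l = Some (Inl h)" "w = A h *v u"
    | (B) j u where "j < t" "l = Some (Inr j)" "w = B j *v u"
    using l w by (auto simp: component_space_def ker_mat_def im_mat_def)
  then show ?thesis
  proof cases
    case ker
    then have A0: "\<And>i. i < s \<Longrightarrow> A i *v w = 0" and B0: "\<And>j. j < t \<Longrightarrow> B j *v w = 0"
      by (simp_all add: M_mult_eq_0_iff)
    then have B_proj0: "\<And>j. j < t \<Longrightarrow> B_proj j w = 0"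
      by (simp add: B_proj_def)
    then have "ker_proj w = w"
      using A0 by (simp add: ker_proj_def)
    then show ?thesis
      using k ker A0 B_proj0 by (auto simp: component_proj_def)
  next
    case (A h u)
    then show ?thesis
      using k by (auto simp: component_proj_def A_A B_proj_A ker_proj_A split: if_splits)
  next
    case (B j u)
    then show ?thesis
      using k by (auto simp: component_proj_def A_B B_proj_B ker_proj_B split: if_splits)
  qed
qed

lemma direct_sum_components: "is_direct_sum (frob_index s t) component_space UNIV"
  by (rule is_direct_sum_by_projections[where \<pi> = component_proj])
    (simp_all add: sum_component_proj component_proj_add component_proj_in_component_space
      component_proj_on_component)

lemma eigenvectors_span: "v \<in> vec.span {v. \<exists>\<mu>. M *v v = \<mu> *s v}"
proof -
  let ?E = "{v. \<exists>\<mu>. M *v v = \<mu> *s v}"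
  have "component_proj k v \<in> vec.span ?E" if k: "k \<in> frob_index s t" for k
  proof -
    consider "k = None" | i where "i < s" "k = Some (Inl i)" | j where "j < t" "k = Some (Inr j)"
      using k by blast
    then show ?thesis
    proof cases
      case 1
      have "ker_proj v \<in> ?E"
        by (intro CollectI exI[of _ 0]) (simp add: M_ker_proj)
      then show ?thesis
        using 1 by (simp add: component_proj_def vec.span_base)
    next
      case (2 i)
      then have "A i *v v \<in> ?E"
        using M_A_mult by blast
      then show ?thesis
        using 2 by (simp add: component_proj_def vec.span_base)
    next
      case (3 j)
      have "B_eigen_part j \<rho> v \<in> vec.span ?E" if "\<rho> ^ 2 = - nn j" for \<rho>
        using M_eigenvector_of_B_eigenvector[OF 3(1) that B_B_eigen_part[OF 3(1) that]]
        by (intro vec.span_base) blast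
      then have "B_eigen_part j (r j) v + B_eigen_part j (- r j) v \<in> vec.span ?E"
        using r_square[OF 3(1)] neg_r_square[OF 3(1)] by (intro vec.span_add)
      then show ?thesis
        using 3 B_eigen_part_pair[OF 3(1) r_square[OF 3(1)]] by (simp add: component_proj_def)
    qed
  qed
  then have "(\<Sum>k\<in>frob_index s t. component_proj k v) \<in> vec.span ?E"
    by (intro vec.span_sum)
  then show ?thesis
    by (simp only: sum_component_proj)
qed

lemma diagonalizable: "diagonalizable_mat M"
  using eigenvectors_span by (rule diagonalizable_if_eigenvectors_span)

lemma eq_if_eq_on_eigenvectors:
  assumes "\<And>v \<mu>. M *v v = \<mu> *s v \<Longrightarrow> P *v v = Q *v v"
  shows "P = Q"
proof -
  have "vec.subspace {v. P *v v = Q *v v}"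
    by (auto simp: vec.subspace_def matrix_vector_right_distrib vector_scalar_commute)
  then have "vec.span {v. \<exists>\<mu>. M *v v = \<mu> *s v} \<subseteq> {v. P *v v = Q *v v}"
    by (rule vec.span_minimal[rotated]) (use assms in auto)
  then show ?thesis
    using eigenvectors_span by (auto simp: matrix_eq)
qed

lemma A_unique:
  assumes "frobenius_roots M s' \<gamma>' A' t' \<alpha>' nn' B' r'" and "i < s" "i' < s'" "\<gamma> i = \<gamma>' i'"
  shows "A i = A' i'"
proof -
  interpret other: frobenius_roots M s' \<gamma>' A' t' \<alpha>' nn' B' r'
    by (fact assms(1))
  show ?thesis
  proof (rule eq_if_eq_on_eigenvectors)
    fix v \<mu> assume e: "M *v v = \<mu> *s v"
    show "A i *v v = A' i' *v v"
      using A_eigenvector[OF e assms(2)] other.A_eigenvector[OF e assms(3)] assms(4) by simp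
  qed
qed

lemma B_unique:
  assumes "frobenius_roots M s' \<gamma>' A' t' \<alpha>' nn' B' r'" and j: "j < t" and "j' < t'"
    and "\<alpha>' j' = \<alpha> j" and "r' j' = r j \<or> r' j' = - r j"
  shows "B j = B' j'"
proof -
  interpret other: frobenius_roots M s' \<gamma>' A' t' \<alpha>' nn' B' r'
    by (fact assms(1))
  show ?thesis
  proof (rule eq_if_eq_on_eigenvectors)
    fix v \<mu> assume e: "M *v v = \<mu> *s v"
    show "B j *v v = B' j' *v v"
      using B_eigenvector[OF e j] other.B_eigenvector[OF e assms(3)] assms(4,5) plus_ne_minus_self[OF j]
      by auto
  qed
qed

definition eigenvalue_of :: "nat + nat \<times> bool \<Rightarrow> 'a" where
  "eigenvalue_of x = (case x of Inl i \<Rightarrow> \<gamma> i | Inr (j, b) \<Rightarrow> if b then \<alpha> j + r j else \<alpha> j - r j)"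

lemma inj_on_eigenvalue_of: "inj_on eigenvalue_of (Inl ` {..<s} \<union> Inr ` ({..<t} \<times> UNIV))"
proof (rule inj_onI, rule ccontr)
  fix x y
  assume x: "x \<in> Inl ` {..<s} \<union> Inr ` ({..<t} \<times> UNIV)" and y: "y \<in> Inl ` {..<s} \<union> Inr ` ({..<t} \<times> UNIV)"
    and eq: "eigenvalue_of x = eigenvalue_of y" and "x \<noteq> y"
  from x y consider (AA) i h where "x = Inl i" "y = Inl h" "i < s" "h < s"
    | (AB) i l c where "x = Inl i" "y = Inr (l, c)" "i < s" "l < t"
    | (BA) j b h where "x = Inr (j, b)" "y = Inl h" "j < t" "h < s"
    | (BB) j b l c where "x = Inr (j, b)" "y = Inr (l, c)" "j < t" "l < t"
    by auto
  then show False
  proof cases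
    case AA
    then show ?thesis
      using eq \<open>x \<noteq> y\<close> gamma_distinct by (auto simp: eigenvalue_of_def)
  next
    case AB
    then show ?thesis
      using eq gamma_ne_plus[OF AB(3,4)] gamma_ne_minus[OF AB(3,4)] by (cases c) (auto simp: eigenvalue_of_def)
  next
    case BA
    then show ?thesis
      using eq gamma_ne_plus[OF BA(4,3)] gamma_ne_minus[OF BA(4,3)] by (cases b) (auto simp: eigenvalue_of_def)
  next
    case BB
    then show ?thesis
      using eq \<open>x \<noteq> y\<close> plus_ne_plus[OF BB(3,4)] plus_ne_minus[OF BB(3,4)] plus_ne_minus[OF BB(4,3)]
        minus_ne_minus[OF BB(3,4)] plus_ne_minus_self[OF BB(3)]
      by (cases b; cases c; cases "j = l") (auto simp: eigenvalue_of_def)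
  qed
qed

lemma nonzero_eigenvalues:
  assumes A_nz: "\<And>i. i < s \<Longrightarrow> A i \<noteq> 0"
    and plus_ev: "\<And>j. j < t \<Longrightarrow> \<exists>x. x \<noteq> 0 \<and> B j *v x = r j *s x"
    and minus_ev: "\<And>j. j < t \<Longrightarrow> \<exists>x. x \<noteq> 0 \<and> B j *v x = (- r j) *s x"
  shows "{\<mu>. is_eigenvalue M \<mu> \<and> \<mu> \<noteq> 0} = eigenvalue_of ` (Inl ` {..<s} \<union> Inr ` ({..<t} \<times> UNIV))"
    (is "?L = eigenvalue_of ` ?I")
proof (intro equalityI subsetI)
  fix \<mu> assume "\<mu> \<in> ?L"
  then obtain v where v: "v \<noteq> 0" "M *v v = \<mu> *s v" and "\<mu> \<noteq> 0"
    by (auto simp: is_eigenvalue_def)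
  show "\<mu> \<in> eigenvalue_of ` ?I"
  proof (rule ccontr)
    assume out: "\<mu> \<notin> eigenvalue_of ` ?I"
    have ne: "\<mu> \<noteq> eigenvalue_of x" if "x \<in> ?I" for x
      using out that by blast
    have "\<mu> \<noteq> \<gamma> i" if "i < s" for i
      using ne[of "Inl i"] that by (simp add: eigenvalue_of_def)
    moreover have "\<mu> \<noteq> \<alpha> j + r j" "\<mu> \<noteq> \<alpha> j - r j" if "j < t" for j
      using ne[of "Inr (j, True)"] ne[of "Inr (j, False)"] that by (simp_all add: eigenvalue_of_def)
    ultimately have "M *v v = 0"
      using A_eigenvector[OF v(2)] B_eigenvector[OF v(2)] by (simp add: M_mult_eq_0_iff)
    with v \<open>\<mu> \<noteq> 0\<close> show False
      by simp
  qed
next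
  fix \<mu> assume "\<mu> \<in> eigenvalue_of ` ?I"
  then consider i where "i < s" "\<mu> = \<gamma> i" | j where "j < t" "\<mu> = \<alpha> j + r j"
    | j where "j < t" "\<mu> = \<alpha> j - r j"
    by (auto simp: eigenvalue_of_def split: if_splits)
  then show "\<mu> \<in> ?L"
  proof cases
    case (1 i)
    obtain w where "A i *v w \<noteq> 0"
      using A_nz[OF 1(1)] by (metis matrix_eq matrix_vector_mult_0)
    then show ?thesis
      using M_A_mult[OF 1(1), of w] 1 gamma_nonzero by (auto simp: is_eigenvalue_def)
  next
    case (2 j)
    then show ?thesis
      using plus_ev[OF 2(1)] M_eigenvector_of_B_eigenvector[OF 2(1) r_square[OF 2(1)]] plus_nonzero
      by (auto simp: is_eigenvalue_def)
  next
    case (3 j)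
    then show ?thesis
      using minus_ev[OF 3(1)] M_eigenvector_of_B_eigenvector[OF 3(1) neg_r_square[OF 3(1)]] minus_nonzero
      by (auto simp: is_eigenvalue_def)
  qed
qed

end

section \<open>The base field inside its algebraic closure\<close>

lemma two_nonzero_if_CHAR: "CHAR('k::field) \<noteq> 2 \<Longrightarrow> (2::'k) \<noteq> 0"
proof
  assume "CHAR('k) \<noteq> 2" and "(2::'k) = 0"
  then have "of_nat 2 = (0::'k)"
    by simp
  then have "CHAR('k) dvd 2"
    by (simp only: of_nat_eq_0_iff_char_dvd)
  then have "CHAR('k) \<le> 2"
    by (rule dvd_imp_le) simp
  with \<open>CHAR('k) \<noteq> 2\<close> \<open>CHAR('k) dvd 2\<close> CHAR_not_1 show False
    by (cases "CHAR('k)") (auto simp: le_Suc_eq)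
qed

lemma to_ac_neq_plus_minus_if_notin_range:
  assumes "x \<notin> range to_ac"
  shows "to_ac c \<noteq> to_ac d + x" "to_ac c \<noteq> to_ac d - x"
proof -
  have "x \<noteq> to_ac (c - d)" "x \<noteq> to_ac (d - c)"
    using assms by blast+
  then show "to_ac c \<noteq> to_ac d + x" "to_ac c \<noteq> to_ac d - x"
    by (auto simp: algebra_simps)
qed

lemma uminus_in_range_to_ac_iff: "- x \<in> range to_ac \<longleftrightarrow> x \<in> range to_ac"
proof
  show "x \<in> range to_ac" if x: "- x \<in> range to_ac" for x :: "'k::field alg_closure"
  proof -
    obtain c where "- x = to_ac c"
      using x by blast
    then have "x = to_ac (- c)"
      by (metis minus_minus to_ac_minus)
    then show ?thesis
      by blast
  qed
  from this[of "- x"] show "- x \<in> range to_ac" if "x \<in> range to_ac"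
    using that by simp
qed

lemma eq_if_square_roots_differ_in_base:
  fixes x y :: "'k::field alg_closure"
  assumes y: "y \<notin> range to_ac" and "x ^ 2 \<in> range to_ac" "y ^ 2 \<in> range to_ac" "x - y \<in> range to_ac"
    and two: "(2::'k) \<noteq> 0"
  shows "x = y"
proof (rule ccontr)
  obtain a b c where abc: "x ^ 2 = to_ac a" "y ^ 2 = to_ac b" "x - y = to_ac c"
    using assms(2-4) by blast
  assume "x \<noteq> y"
  then have "c \<noteq> 0"
    using abc(3) by auto
  have "x = y + to_ac c"
    using abc(3) by (simp add: algebra_simps)
  then have "2 * to_ac c * y = to_ac (a - b - c ^ 2)"
    using abc(1,2) by (simp add: power2_eq_square algebra_simps)
  moreover have "(2::'k alg_closure) \<noteq> 0"
    using two by (metis to_ac_numeral to_ac_eq_0_iff)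
  ultimately have "y = to_ac ((a - b - c ^ 2) / (2 * c))"
    using \<open>c \<noteq> 0\<close> by (simp add: field_simps)
  with y show False
    by blast
qed

lemma map_poly_to_ac_diff: "map_poly to_ac (p - q) = map_poly to_ac p - map_poly to_ac q"
  by (rule poly_eqI) (simp add: coeff_map_poly)

lemma root_of_linear_poly_in_range:
  fixes q :: "'k::field poly"
  assumes "Polynomial.degree q \<le> 1" "q \<noteq> 0" "poly (map_poly to_ac q) x = 0"
  shows "x \<in> range to_ac"
proof -
  have q: "q = [:Polynomial.coeff q 0, Polynomial.coeff q 1:]"
    using assms(1) by (intro poly_eqI) (auto simp: coeff_pCons split: nat.splits intro: coeff_eq_0)
  have root: "to_ac (Polynomial.coeff q 0) + x * to_ac (Polynomial.coeff q 1) = 0"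
    using assms(3) by (subst (asm) q) (simp add: map_poly_pCons)
  show ?thesis
  proof (cases "Polynomial.coeff q 1 = 0")
    case True
    with q assms(2) root show ?thesis
      by auto
  next
    case False
    with root have "x = to_ac (- Polynomial.coeff q 0 / Polynomial.coeff q 1)"
      by (simp add: field_simps add_eq_0_iff2)
    then show ?thesis
      by blast
  qed
qed

lemma alg_min_poly_plus_sqrt:
  fixes a n :: "'k::field" and x :: "'k alg_closure"
  assumes sq: "x ^ 2 = - to_ac n" and x: "x \<notin> range to_ac"
  shows "alg_min_poly (to_ac a + x) = [:a ^ 2 + n, - 2 * a, 1:]"
  unfolding alg_min_poly_def
proof (rule The_monic_least_degree_eq[where Z = "\<lambda>q. poly (map_poly to_ac q) (to_ac a + x) = 0"])
  show "Polynomial.lead_coeff [:a ^ 2 + n, - 2 * a, 1:] = 1"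
    by simp
  show "poly (map_poly to_ac [:a ^ 2 + n, - 2 * a, 1:]) (to_ac a + x) = 0"
    using sq by (simp add: map_poly_pCons power2_eq_square algebra_simps)
  show "Polynomial.degree [:a ^ 2 + n, - 2 * a, 1:] \<le> Polynomial.degree q"
    if "q \<noteq> 0" "poly (map_poly to_ac q) (to_ac a + x) = 0" for q
  proof (rule ccontr)
    assume "\<not> ?thesis"
    then have "Polynomial.degree q \<le> 1"
      by simp
    then have "to_ac a + x \<in> range to_ac"
      by (rule root_of_linear_poly_in_range[OF _ that])
    then obtain c where "to_ac a + x = to_ac c"
      by blast
    with to_ac_neq_plus_minus_if_notin_range(1)[OF x, of c a] show False
      by simp
  qed
  show "poly (map_poly to_ac (p - q)) (to_ac a + x) = 0"
    if "poly (map_poly to_ac p) (to_ac a + x) = 0" "poly (map_poly to_ac q) (to_ac a + x) = 0" for p q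
    using that by (simp add: map_poly_to_ac_diff)
qed

section \<open>Fine Frobenius decompositions\<close>

lemma ext_mat_nth [simp]: "ext_mat A $ i $ j = to_ac (A $ i $ j)"
  by (simp add: ext_mat_def)

lemma ext_mat_mult: "ext_mat (A ** B) = ext_mat A ** ext_mat B"
  by (simp add: vec_eq_iff matrix_matrix_mult_def to_ac_sum)

lemma ext_mat_add: "ext_mat (A + B) = ext_mat A + ext_mat B"
  by (simp add: vec_eq_iff)

lemma ext_mat_diff: "ext_mat (A - B) = ext_mat A - ext_mat B"
  by (simp add: vec_eq_iff)

lemma ext_mat_uminus: "ext_mat (- A) = - ext_mat A"
  by (simp add: vec_eq_iff)

lemma ext_mat_0: "ext_mat 0 = 0"
  by (simp add: vec_eq_iff)

lemma ext_mat_sum: "ext_mat (\<Sum>k\<in>S. A k) = (\<Sum>k\<in>S. ext_mat (A k))"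
  by (induction S rule: infinite_finite_induct) (auto simp: ext_mat_0 ext_mat_add)

lemma ext_mat_scal_mat: "ext_mat (scal_mat c A) = scal_mat (to_ac c) (ext_mat A)"
  by (simp add: vec_eq_iff scal_mat_def)

lemma ext_mat_eq_iff: "ext_mat A = ext_mat B \<longleftrightarrow> A = B"
  by (auto simp: vec_eq_iff)

lemma ext_mat_eq_0_iff: "ext_mat A = 0 \<longleftrightarrow> A = 0"
  using ext_mat_eq_iff[of A 0] by (simp add: ext_mat_0)

lemma ext_mat_square_plus_scaled_nonzero:
  fixes B :: "'k::field^'n^'n" and x :: "'k alg_closure"
  assumes "B \<noteq> 0" "x \<notin> range to_ac"
  shows "\<exists>w. ext_mat B *v (ext_mat B *v w) + x *s (ext_mat B *v w) \<noteq> 0"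
proof (rule ccontr)
  assume "\<not> ?thesis"
  then have "(ext_mat (B ** B) + scal_mat x (ext_mat B)) *v w = 0 *v w" for w
    by (simp add: ext_mat_mult matrix_vector_mult_add_rdistrib scal_mat_matrix_vector_mult matrix_vector_mul_assoc)
  then have Z: "ext_mat (B ** B) + scal_mat x (ext_mat B) = 0"
    by (subst matrix_eq) blast
  obtain p q where pq: "B $ p $ q \<noteq> 0"
    using assms(1) by (metis vec_eq_iff zero_index)
  have "to_ac ((B ** B) $ p $ q) + x * to_ac (B $ p $ q) = 0"
    using arg_cong[OF Z, of "\<lambda>C. C $ p $ q"] by (simp add: scal_mat_def)
  then have "x = to_ac (- ((B ** B) $ p $ q) / B $ p $ q)"
    using pq by (simp add: field_simps add_eq_0_iff2)
  with assms(2) show False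
    by blast
qed

lemma frobenius_system_of_matrices:
  fixes M :: "'a::field^'n^'n"
  assumes "\<forall>i<s. \<forall>h<s. A i ** A h = (if i = h then A i else 0)"
    and "\<forall>i<s. \<forall>j<t. A i ** B j = 0 \<and> B j ** A i = 0"
    and "\<forall>j<t. \<forall>l<t. j \<noteq> l \<longrightarrow> B j ** B l = 0"
    and "\<forall>j<t. B j ** B j ** B j = - scal_mat (nn j) (B j)"
    and "\<forall>j<t. nn j \<noteq> 0"
    and "M = (\<Sum>i<s. scal_mat (\<gamma> i) (A i)) - (\<Sum>j<t. scal_mat (\<alpha> j / nn j) (B j ** B j)) + (\<Sum>j<t. B j)"
  shows "frobenius_system M s \<gamma> A t \<alpha> nn B"
proof
  fix i h x assume "i < s" "h < s"
  then show "A i *v (A h *v x) = (if i = h then A i *v x else 0)"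
    using assms(1) by (simp add: matrix_vector_mul_assoc)
next
  fix i j x assume "i < s" "j < t"
  then show "A i *v (B j *v x) = 0" "B j *v (A i *v x) = 0"
    using assms(2) by (simp_all add: matrix_vector_mul_assoc)
next
  fix j l x assume "j < t" "l < t" "j \<noteq> l"
  then show "B j *v (B l *v x) = 0"
    using assms(3) by (simp add: matrix_vector_mul_assoc)
next
  fix j x assume "j < t"
  then show "B j *v (B j *v (B j *v x)) = (- nn j) *s (B j *v x)"
    using assms(4) by (simp add: matrix_vector_mul_assoc matrix_mul_assoc uminus_matrix_vector_mult
        scal_mat_matrix_vector_mult vector_smult_lneg)
next
  fix j assume "j < t"
  then show "nn j \<noteq> 0"
    using assms(5) by simp
next
  fix x
  show "M *v x = (\<Sum>i<s. \<gamma> i *s (A i *v x)) - (\<Sum>j<t. (\<alpha> j / nn j) *s (B j *v (B j *v x))) + (\<Sum>j<t. B j *v x)"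
    by (subst assms(6)) (simp add: matrix_vector_mult_add_rdistrib matrix_vector_mult_diff_rdistrib
        sum_matrix_vector_mult scal_mat_matrix_vector_mult matrix_vector_mul_assoc)
qed

lemma fine_frobeniusD:
  assumes "fine_frobenius M s \<gamma> A t \<alpha> nn r B"
  shows "0 < s + t" "\<And>i. i < s \<Longrightarrow> A i \<noteq> 0" "\<And>j. j < t \<Longrightarrow> B j \<noteq> 0"
    "\<And>j. j < t \<Longrightarrow> r j ^ 2 = - to_ac (nn j)" "\<And>j. j < t \<Longrightarrow> r j \<notin> range to_ac"
    "\<And>i. i < s \<Longrightarrow> \<gamma> i \<noteq> 0" "\<And>i h. i < s \<Longrightarrow> h < s \<Longrightarrow> i \<noteq> h \<Longrightarrow> \<gamma> i \<noteq> \<gamma> h"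
    "\<And>j l. j < t \<Longrightarrow> l < t \<Longrightarrow> j \<noteq> l \<Longrightarrow> to_ac (\<alpha> j) + r j \<noteq> to_ac (\<alpha> l) + r l"
    "\<And>j l. j < t \<Longrightarrow> l < t \<Longrightarrow> j \<noteq> l \<Longrightarrow> to_ac (\<alpha> j) + r j \<noteq> to_ac (\<alpha> l) - r l"
  using assms unfolding fine_frobenius_def by simp_all

lemma fine_frobenius_nn_nonzero:
  assumes dec: "fine_frobenius M s \<gamma> A t \<alpha> nn r B" and j: "j < t"
  shows "nn j \<noteq> 0"
proof
  assume "nn j = 0"
  then have "r j = to_ac 0"
    using fine_frobeniusD(4)[OF dec j] by simp
  with fine_frobeniusD(5)[OF dec j] show False
    by blast
qed

lemma fine_frobenius_imp_frobenius_system: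
  assumes dec: "fine_frobenius M s \<gamma> A t \<alpha> nn r B"
  shows "frobenius_system M s \<gamma> A t \<alpha> nn B"
  using dec fine_frobenius_nn_nonzero[OF dec] unfolding fine_frobenius_def
  by (intro frobenius_system_of_matrices) simp_all

lemma fine_frobenius_imp_ext_frobenius_system:
  assumes dec: "fine_frobenius M s \<gamma> A t \<alpha> nn r B"
  shows "frobenius_system (ext_mat M) s (\<lambda>i. to_ac (\<gamma> i)) (\<lambda>i. ext_mat (A i)) t (\<lambda>j. to_ac (\<alpha> j))
    (\<lambda>j. to_ac (nn j)) (\<lambda>j. ext_mat (B j))"
proof (rule frobenius_system_of_matrices)
  have rel: "\<forall>i<s. \<forall>h<s. A i ** A h = (if i = h then A i else 0)"
    "\<forall>i<s. \<forall>j<t. A i ** B j = 0 \<and> B j ** A i = 0" "\<forall>j<t. \<forall>l<t. j \<noteq> l \<longrightarrow> B j ** B l = 0"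
    "\<forall>j<t. B j ** B j ** B j = - scal_mat (nn j) (B j)"
    "M = (\<Sum>i<s. scal_mat (\<gamma> i) (A i)) - (\<Sum>j<t. scal_mat (\<alpha> j / nn j) (B j ** B j)) + (\<Sum>j<t. B j)"
    using dec unfolding fine_frobenius_def by simp_all
  then show "\<forall>i<s. \<forall>h<s. ext_mat (A i) ** ext_mat (A h) = (if i = h then ext_mat (A i) else 0)"
    "\<forall>i<s. \<forall>j<t. ext_mat (A i) ** ext_mat (B j) = 0 \<and> ext_mat (B j) ** ext_mat (A i) = 0"
    "\<forall>j<t. \<forall>l<t. j \<noteq> l \<longrightarrow> ext_mat (B j) ** ext_mat (B l) = 0"
    "\<forall>j<t. ext_mat (B j) ** ext_mat (B j) ** ext_mat (B j) = - scal_mat (to_ac (nn j)) (ext_mat (B j))"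
    by (simp_all add: ext_mat_mult[symmetric] ext_mat_scal_mat[symmetric] ext_mat_uminus[symmetric] ext_mat_0)
  from rel(5) show "ext_mat M = (\<Sum>i<s. scal_mat (to_ac (\<gamma> i)) (ext_mat (A i))) -
      (\<Sum>j<t. scal_mat (to_ac (\<alpha> j) / to_ac (nn j)) (ext_mat (B j) ** ext_mat (B j))) + (\<Sum>j<t. ext_mat (B j))"
    by (simp add: ext_mat_add ext_mat_diff ext_mat_sum ext_mat_scal_mat ext_mat_mult)
  show "\<forall>j<t. to_ac (nn j) \<noteq> 0"
    using fine_frobenius_nn_nonzero[OF dec] by simp
qed

(* Not required by the definition; it follows from r l \<notin> K by conjugation. *)
lemma fine_frobenius_minus_roots_distinct:
  fixes M :: "'k::field^'n^'n"
  assumes char: "CHAR('k) \<noteq> 2" and dec: "fine_frobenius M s \<gamma> A t \<alpha> nn r B"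
    and jl: "j < t" "l < t" "j \<noteq> l"
  shows "to_ac (\<alpha> j) - r j \<noteq> to_ac (\<alpha> l) - r l"
proof
  note F = fine_frobeniusD[OF dec]
  assume eq: "to_ac (\<alpha> j) - r j = to_ac (\<alpha> l) - r l"
  have "r j - r l = to_ac (\<alpha> j - \<alpha> l)"
    using eq by (simp add: algebra_simps)
  moreover have "r j ^ 2 = to_ac (- nn j)" "r l ^ 2 = to_ac (- nn l)"
    using F(4)[OF jl(1)] F(4)[OF jl(2)] by simp_all
  ultimately have "r j ^ 2 \<in> range to_ac" "r l ^ 2 \<in> range to_ac" "r j - r l \<in> range to_ac"
    by (metis rangeI)+
  then have "r j = r l"
    using eq_if_square_roots_differ_in_base[OF F(5)[OF jl(2)] _ _ _ two_nonzero_if_CHAR[OF char]] by blast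
  then have "to_ac (\<alpha> j) + r j = to_ac (\<alpha> l) + r l"
    using eq by simp
  with F(8)[OF jl] show False
    by blast
qed

lemma fine_frobenius_imp_ext_frobenius_roots:
  fixes M :: "'k::field^'n^'n"
  assumes char: "CHAR('k) \<noteq> 2" and dec: "fine_frobenius M s \<gamma> A t \<alpha> nn r B"
  shows "frobenius_roots (ext_mat M) s (\<lambda>i. to_ac (\<gamma> i)) (\<lambda>i. ext_mat (A i)) t (\<lambda>j. to_ac (\<alpha> j))
    (\<lambda>j. to_ac (nn j)) (\<lambda>j. ext_mat (B j)) r"
proof (intro frobenius_roots.intro frobenius_roots_axioms.intro fine_frobenius_imp_ext_frobenius_system[OF dec]
    fine_frobenius_minus_roots_distinct[OF char dec])
  note F = fine_frobeniusD[OF dec]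
  note ne = to_ac_neq_plus_minus_if_notin_range[OF F(5)]
  show "r j ^ 2 = - to_ac (nn j)" if "j < t" for j
    using F(4)[OF that] .
  show "(2::'k alg_closure) \<noteq> 0"
    using two_nonzero_if_CHAR[OF char] by (metis to_ac_numeral to_ac_eq_0_iff)
  show "to_ac (\<gamma> i) \<noteq> to_ac (\<alpha> j) + r j" "to_ac (\<gamma> i) \<noteq> to_ac (\<alpha> j) - r j"
    if "i < s" "j < t" for i j
    using ne[OF that(2)] by simp_all
  show "to_ac (\<gamma> i) \<noteq> 0" if "i < s" for i
    using F(6)[OF that] by simp
  show "to_ac (\<gamma> i) \<noteq> to_ac (\<gamma> h)" if "i < s" "h < s" "i \<noteq> h" for i h
    using F(7)[OF that] by simp
  show "to_ac (\<alpha> j) + r j \<noteq> 0" "to_ac (\<alpha> j) - r j \<noteq> 0" if "j < t" for j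
    using ne[OF that, of 0 "\<alpha> j"] by (metis to_ac_0)+
  show "to_ac (\<alpha> j) + r j \<noteq> to_ac (\<alpha> l) + r l" "to_ac (\<alpha> j) + r j \<noteq> to_ac (\<alpha> l) - r l"
    if "j < t" "l < t" "j \<noteq> l" for j l
    using F(8,9)[OF that] by simp_all
qed

locale fine_frobenius_decomp =
  fixes M :: "'k::field^'n^'n" and s :: nat and \<gamma> :: "nat \<Rightarrow> 'k" and A :: "nat \<Rightarrow> 'k^'n^'n"
    and t :: nat and \<alpha> nn :: "nat \<Rightarrow> 'k" and r :: "nat \<Rightarrow> 'k alg_closure" and B :: "nat \<Rightarrow> 'k^'n^'n"
  assumes char: "CHAR('k) \<noteq> 2" and dec: "fine_frobenius M s \<gamma> A t \<alpha> nn r B"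

sublocale fine_frobenius_decomp \<subseteq> base: frobenius_system M s \<gamma> A t \<alpha> nn B
  using dec by (rule fine_frobenius_imp_frobenius_system)

sublocale fine_frobenius_decomp \<subseteq> ext: frobenius_roots "ext_mat M" s "\<lambda>i. to_ac (\<gamma> i)" "\<lambda>i. ext_mat (A i)"
  t "\<lambda>j. to_ac (\<alpha> j)" "\<lambda>j. to_ac (nn j)" "\<lambda>j. ext_mat (B j)" r
  using char dec by (rule fine_frobenius_imp_ext_frobenius_roots)

context fine_frobenius_decomp
begin

lemma B_root_eigenvector_exists:
  assumes j: "j < t" and \<rho>: "\<rho> = r j \<or> \<rho> = - r j"
  shows "\<exists>x. x \<noteq> 0 \<and> ext_mat (B j) *v x = \<rho> *s x"
proof -
  have "\<rho> \<notin> range to_ac"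
    using \<rho> fine_frobeniusD(5)[OF dec j] uminus_in_range_to_ac_iff[of "r j"] by (elim disjE) simp_all
  then obtain w where w: "ext_mat (B j) *v (ext_mat (B j) *v w) + \<rho> *s (ext_mat (B j) *v w) \<noteq> 0"
    using ext_mat_square_plus_scaled_nonzero fine_frobeniusD(3)[OF dec j] by blast
  have sq: "\<rho> ^ 2 = - to_ac (nn j)"
    using \<rho> ext.r_square[OF j] by auto
  then have "\<rho> \<noteq> 0"
    using ext.nn_nonzero[OF j] by auto
  define x where "x = ext.B_eigen_part j \<rho> (ext_mat (B j) *v w)"
  have "x = (1 / (2 * \<rho>)) *s (ext_mat (B j) *v (ext_mat (B j) *v w) + \<rho> *s (ext_mat (B j) *v w))"
    using ext.B_proj_B[OF j j] by (simp add: x_def ext.B_eigen_part_def)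
  moreover have "(1 / (2 * \<rho>)) *s (ext_mat (B j) *v (ext_mat (B j) *v w) + \<rho> *s (ext_mat (B j) *v w)) \<noteq> 0"
    using w \<open>\<rho> \<noteq> 0\<close> ext.two_nonzero by (simp only: vector_mul_eq_0 de_Morgan_disj) simp
  ultimately have "x \<noteq> 0"
    by simp
  moreover have "ext_mat (B j) *v x = \<rho> *s x"
    unfolding x_def by (rule ext.B_B_eigen_part[OF j sq])
  ultimately show ?thesis
    by blast
qed

lemma semisimple_with_nonzero_eigenvalues:
  "semisimple M \<and> M \<noteq> 0 \<and>
     inj_on (frob_ev \<gamma> \<alpha> r) (Inl ` {..<s} \<union> Inr ` ({..<t} \<times> UNIV)) \<and>
     {\<mu>. is_eigenvalue (ext_mat M) \<mu> \<and> \<mu> \<noteq> 0} =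
       frob_ev \<gamma> \<alpha> r ` (Inl ` {..<s} \<union> Inr ` ({..<t} \<times> UNIV))"
proof -
  have ev: "frob_ev \<gamma> \<alpha> r = ext.eigenvalue_of"
    by (auto simp: fun_eq_iff frob_ev_def ext.eigenvalue_of_def split: sum.split)
  have nonzero: "{\<mu>. is_eigenvalue (ext_mat M) \<mu> \<and> \<mu> \<noteq> 0} =
       ext.eigenvalue_of ` (Inl ` {..<s} \<union> Inr ` ({..<t} \<times> UNIV))"
  proof (rule ext.nonzero_eigenvalues)
    show "ext_mat (A i) \<noteq> 0" if "i < s" for i
      using fine_frobeniusD(2)[OF dec that] by (simp add: ext_mat_eq_0_iff)
    show "\<exists>x. x \<noteq> 0 \<and> ext_mat (B j) *v x = r j *s x" "\<exists>x. x \<noteq> 0 \<and> ext_mat (B j) *v x = (- r j) *s x"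
      if "j < t" for j
      using B_root_eigenvector_exists[OF that] by blast+
  qed
  moreover have "M \<noteq> 0"
  proof
    assume "M = 0"
    then have "{\<mu>. is_eigenvalue (ext_mat M) \<mu> \<and> \<mu> \<noteq> 0} = {}"
      by (auto simp: is_eigenvalue_def ext_mat_0)
    moreover have "Inl ` {..<s} \<union> Inr ` ({..<t} \<times> UNIV) \<noteq> {}"
      using fine_frobeniusD(1)[OF dec] by auto
    ultimately show False
      using nonzero by simp
  qed
  ultimately show ?thesis
    using ext.diagonalizable ext.inj_on_eigenvalue_of by (simp add: semisimple_def ev)
qed

lemma eigenspace_decomposition:
  "is_direct_sum (insert None (Some ` (Inl ` {..<s} \<union> Inr ` {..<t}))) (frob_space M A B) UNIV \<and>
     (\<forall>i<s. im_mat (ext_mat (A i)) = eigenspace (ext_mat M) (to_ac (\<gamma> i))) \<and>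
     (\<forall>j<t. is_direct_sum (UNIV :: bool set)
        (\<lambda>b. eigenspace (ext_mat M) (if b then to_ac (\<alpha> j) + r j else to_ac (\<alpha> j) - r j))
        (im_mat (ext_mat (B j)))) \<and>
     ker_mat (ext_mat M) = (\<Inter>i\<in>{..<s}. ker_mat (ext_mat (A i))) \<inter> (\<Inter>j\<in>{..<t}. ker_mat (ext_mat (B j))) \<and>
     (\<forall>j<t. eigenspace (ext_mat M) (to_ac (\<alpha> j) + r j) = ker_mat (ext_mat (B j) - mat (r j)) \<and>
            eigenspace (ext_mat M) (to_ac (\<alpha> j) - r j) = ker_mat (ext_mat (B j) + mat (r j)))"
proof -
  have "frob_space M A B = ext.component_space"
    by (auto simp: fun_eq_iff frob_space_def ext.component_space_def split: option.split sum.split)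
  then show ?thesis
    using ext.direct_sum_components ext.im_A_eq_eigenspace ext.im_B_direct_sum ext.ker_M_eq_Inter
      ext.eigenspace_plus_eq ext.eigenspace_minus_eq by simp
qed

lemma A_determined_by_M:
  "(\<forall>i<s. (\<forall>v \<in> eigenspace (ext_mat M) (to_ac (\<gamma> i)). ext_mat (A i) *v v = v) \<and>
            (\<forall>\<mu>. is_eigenvalue (ext_mat M) \<mu> \<and> \<mu> \<noteq> to_ac (\<gamma> i) \<longrightarrow>
                 (\<forall>v \<in> eigenspace (ext_mat M) \<mu>. ext_mat (A i) *v v = 0))) \<and>
     (\<forall>s' \<gamma>' A' t' \<alpha>' nn' r' B'. fine_frobenius M s' \<gamma>' A' t' \<alpha>' nn' r' B' \<longrightarrow>
        (\<forall>i<s. \<forall>i'<s'. \<gamma> i = \<gamma>' i' \<longrightarrow> A i = A' i'))"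
proof (intro conjI allI impI ballI)
  fix i v assume "i < s" "v \<in> eigenspace (ext_mat M) (to_ac (\<gamma> i))"
  then show "ext_mat (A i) *v v = v"
    using ext.A_eigenvector[of v "to_ac (\<gamma> i)" i] by (simp add: eigenspace_eq)
next
  fix i \<mu> v assume "i < s" "is_eigenvalue (ext_mat M) \<mu> \<and> \<mu> \<noteq> to_ac (\<gamma> i)"
    "v \<in> eigenspace (ext_mat M) \<mu>"
  then show "ext_mat (A i) *v v = 0"
    using ext.A_eigenvector[of v \<mu> i] by (simp add: eigenspace_eq)
next
  fix s' \<gamma>' A' t' \<alpha>' nn' r' B' i i'
  assume "fine_frobenius M s' \<gamma>' A' t' \<alpha>' nn' r' B'" "i < s" "i' < s'" "\<gamma> i = \<gamma>' i'"
  then show "A i = A' i'"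
    using ext.A_unique[OF fine_frobenius_imp_ext_frobenius_roots[OF char]] by (simp add: ext_mat_eq_iff)
qed

lemma B_determined_by_M:
  "(\<forall>j<t. (\<forall>v \<in> eigenspace (ext_mat M) (to_ac (\<alpha> j) + r j). ext_mat (B j) *v v = r j *s v) \<and>
            (\<forall>v \<in> eigenspace (ext_mat M) (to_ac (\<alpha> j) - r j). ext_mat (B j) *v v = (- r j) *s v) \<and>
            (\<forall>\<mu>. is_eigenvalue (ext_mat M) \<mu> \<and> \<mu> \<noteq> to_ac (\<alpha> j) + r j \<and> \<mu> \<noteq> to_ac (\<alpha> j) - r j \<longrightarrow>
                 (\<forall>v \<in> eigenspace (ext_mat M) \<mu>. ext_mat (B j) *v v = 0))) \<and>
     (\<forall>s' \<gamma>' A' t' \<alpha>' nn' r' B'. fine_frobenius M s' \<gamma>' A' t' \<alpha>' nn' r' B' \<longrightarrow>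
        (\<forall>j<t. \<forall>j'<t'.
           (to_ac (\<alpha> j) + r j = to_ac (\<alpha>' j') + r' j' \<or> to_ac (\<alpha> j) + r j = to_ac (\<alpha>' j') - r' j')
           \<longrightarrow> B j = B' j'))"
proof (intro conjI allI impI ballI)
  fix j v assume "j < t" "v \<in> eigenspace (ext_mat M) (to_ac (\<alpha> j) + r j)"
  then show "ext_mat (B j) *v v = r j *s v"
    using ext.B_eigenvector[of v "to_ac (\<alpha> j) + r j" j] by (simp add: eigenspace_eq)
next
  fix j v assume "j < t" "v \<in> eigenspace (ext_mat M) (to_ac (\<alpha> j) - r j)"
  then show "ext_mat (B j) *v v = (- r j) *s v"
    using ext.B_eigenvector[of v "to_ac (\<alpha> j) - r j" j] ext.plus_ne_minus_self by (simp add: eigenspace_eq)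
next
  fix j \<mu> v assume "j < t" "is_eigenvalue (ext_mat M) \<mu> \<and> \<mu> \<noteq> to_ac (\<alpha> j) + r j \<and> \<mu> \<noteq> to_ac (\<alpha> j) - r j"
    "v \<in> eigenspace (ext_mat M) \<mu>"
  then show "ext_mat (B j) *v v = 0"
    using ext.B_eigenvector[of v \<mu> j] by (simp add: eigenspace_eq)
next
  fix s' \<gamma>' A' t' \<alpha>' nn' r' B' j j'
  assume dec': "fine_frobenius M s' \<gamma>' A' t' \<alpha>' nn' r' B'" and j: "j < t" and j': "j' < t'"
    and eq: "to_ac (\<alpha> j) + r j = to_ac (\<alpha>' j') + r' j' \<or> to_ac (\<alpha> j) + r j = to_ac (\<alpha>' j') - r' j'"
  obtain \<rho> where \<rho>: "\<rho> = r' j' \<or> \<rho> = - r' j'" and eq\<rho>: "to_ac (\<alpha> j) + r j = to_ac (\<alpha>' j') + \<rho>"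
    using eq by fastforce
  have "r j ^ 2 \<in> range to_ac" "\<rho> ^ 2 \<in> range to_ac" "r j - \<rho> \<in> range to_ac"
    using ext.r_square[OF j] fine_frobeniusD(4)[OF dec' j'] \<rho> eq\<rho>
    by (auto intro: range_eqI[of _ _ "\<alpha>' j' - \<alpha> j"] simp: algebra_simps)
      (metis rangeI to_ac_minus)+
  moreover have "\<rho> \<notin> range to_ac"
    using \<rho> fine_frobeniusD(5)[OF dec' j'] uminus_in_range_to_ac_iff[of "r' j'"] by (elim disjE) simp_all
  ultimately have "r j = \<rho>"
    using eq_if_square_roots_differ_in_base two_nonzero_if_CHAR[OF char] by blast
  then have "\<alpha>' j' = \<alpha> j" "r' j' = r j \<or> r' j' = - r j"
    using eq\<rho> \<rho> by auto
  then show "B j = B' j'"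
    using ext.B_unique[OF fine_frobenius_imp_ext_frobenius_roots[OF char dec'] j j'] by (simp add: ext_mat_eq_iff)
qed

lemma quadratic_roots_and_splitting_bound:
  "(\<forall>j<t. alg_degree (to_ac (\<alpha> j) + r j) = 2 \<and>
            map_poly to_ac (alg_min_poly (to_ac (\<alpha> j) + r j)) =
              [:- (to_ac (\<alpha> j) + r j), 1:] * [:- (to_ac (\<alpha> j) - r j), 1:] \<and>
            \<alpha> j = H_K (to_ac (\<alpha> j) + r j) \<and>
            to_ac (nn j) = - (V_K (to_ac (\<alpha> j) + r j) ^ 2)) \<and>
     splitting_bound M \<le> 2"
proof (intro conjI allI impI)
  fix j assume j: "j < t"
  note sq = fine_frobeniusD(4)[OF dec j]
  have mp: "alg_min_poly (to_ac (\<alpha> j) + r j) = [:\<alpha> j ^ 2 + nn j, - 2 * \<alpha> j, 1:]"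
    by (rule alg_min_poly_plus_sqrt[OF sq fine_frobeniusD(5)[OF dec j]])
  show deg: "alg_degree (to_ac (\<alpha> j) + r j) = 2"
    by (simp add: alg_degree_def mp)
  show "map_poly to_ac (alg_min_poly (to_ac (\<alpha> j) + r j)) =
      [:- (to_ac (\<alpha> j) + r j), 1:] * [:- (to_ac (\<alpha> j) - r j), 1:]"
    unfolding mp using sq by (simp add: map_poly_pCons power2_eq_square algebra_simps)
  show H: "\<alpha> j = H_K (to_ac (\<alpha> j) + r j)"
    using two_nonzero_if_CHAR[OF char] by (simp add: H_K_def deg mp)
  show "to_ac (nn j) = - (V_K (to_ac (\<alpha> j) + r j) ^ 2)"
    using sq by (simp add: V_K_def H[symmetric])
next
  show "splitting_bound M \<le> 2"
    by (rule splitting_bound_le[OF _ _ base.frob_annihilator]) (auto simp: frob_factor_def split: option.split sum.split)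
qed

end

theorem lemma3p4:
  fixes M :: "'k::field ^'n^'n"
    and s t :: nat and \<gamma> \<alpha> nn :: "nat \<Rightarrow> 'k" and r :: "nat \<Rightarrow> 'k alg_closure"
    and A B :: "nat \<Rightarrow> 'k^'n^'n"
  assumes char: "CHAR('k) \<noteq> 2"
    and dec: "fine_frobenius M s \<gamma> A t \<alpha> nn r B"
  shows
    "\<comment> \<open>(a)\<close>
    (semisimple M \<and> M \<noteq> 0 \<and>
     inj_on (frob_ev \<gamma> \<alpha> r) (Inl ` {..<s} \<union> Inr ` ({..<t} \<times> UNIV)) \<and>
     {\<mu>. is_eigenvalue (ext_mat M) \<mu> \<and> \<mu> \<noteq> 0} =
       frob_ev \<gamma> \<alpha> r ` (Inl ` {..<s} \<union> Inr ` ({..<t} \<times> UNIV))) \<and>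
    \<comment> \<open>(b)\<close>
    (is_direct_sum (insert None (Some ` (Inl ` {..<s} \<union> Inr ` {..<t}))) (frob_space M A B) UNIV \<and>
     (\<forall>i<s. im_mat (ext_mat (A i)) = eigenspace (ext_mat M) (to_ac (\<gamma> i))) \<and>
     (\<forall>j<t. is_direct_sum (UNIV :: bool set)
        (\<lambda>b. eigenspace (ext_mat M) (if b then to_ac (\<alpha> j) + r j else to_ac (\<alpha> j) - r j))
        (im_mat (ext_mat (B j)))) \<and>
     ker_mat (ext_mat M) = (\<Inter>i\<in>{..<s}. ker_mat (ext_mat (A i))) \<inter> (\<Inter>j\<in>{..<t}. ker_mat (ext_mat (B j))) \<and>
     (\<forall>j<t. eigenspace (ext_mat M) (to_ac (\<alpha> j) + r j) = ker_mat (ext_mat (B j) - mat (r j)) \<and>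
            eigenspace (ext_mat M) (to_ac (\<alpha> j) - r j) = ker_mat (ext_mat (B j) + mat (r j)))) \<and>
    \<comment> \<open>(c)\<close>
    ((\<forall>i<s. (\<forall>v \<in> eigenspace (ext_mat M) (to_ac (\<gamma> i)). ext_mat (A i) *v v = v) \<and>
            (\<forall>\<mu>. is_eigenvalue (ext_mat M) \<mu> \<and> \<mu> \<noteq> to_ac (\<gamma> i) \<longrightarrow>
                 (\<forall>v \<in> eigenspace (ext_mat M) \<mu>. ext_mat (A i) *v v = 0))) \<and>
     (\<forall>s' \<gamma>' A' t' \<alpha>' nn' r' B'. fine_frobenius M s' \<gamma>' A' t' \<alpha>' nn' r' B' \<longrightarrow>
        (\<forall>i<s. \<forall>i'<s'. \<gamma> i = \<gamma>' i' \<longrightarrow> A i = A' i'))) \<and>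
    \<comment> \<open>(d)\<close>
    ((\<forall>j<t. (\<forall>v \<in> eigenspace (ext_mat M) (to_ac (\<alpha> j) + r j). ext_mat (B j) *v v = r j *s v) \<and>
            (\<forall>v \<in> eigenspace (ext_mat M) (to_ac (\<alpha> j) - r j). ext_mat (B j) *v v = (- r j) *s v) \<and>
            (\<forall>\<mu>. is_eigenvalue (ext_mat M) \<mu> \<and> \<mu> \<noteq> to_ac (\<alpha> j) + r j \<and> \<mu> \<noteq> to_ac (\<alpha> j) - r j \<longrightarrow>
                 (\<forall>v \<in> eigenspace (ext_mat M) \<mu>. ext_mat (B j) *v v = 0))) \<and>
     (\<forall>s' \<gamma>' A' t' \<alpha>' nn' r' B'. fine_frobenius M s' \<gamma>' A' t' \<alpha>' nn' r' B' \<longrightarrow>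
        (\<forall>j<t. \<forall>j'<t'.
           (to_ac (\<alpha> j) + r j = to_ac (\<alpha>' j') + r' j' \<or> to_ac (\<alpha> j) + r j = to_ac (\<alpha>' j') - r' j')
           \<longrightarrow> B j = B' j'))) \<and>
    \<comment> \<open>(e)\<close>
    ((\<forall>j<t. alg_degree (to_ac (\<alpha> j) + r j) = 2 \<and>
            map_poly to_ac (alg_min_poly (to_ac (\<alpha> j) + r j)) =
              [:- (to_ac (\<alpha> j) + r j), 1:] * [:- (to_ac (\<alpha> j) - r j), 1:] \<and>
            \<alpha> j = H_K (to_ac (\<alpha> j) + r j) \<and>
            to_ac (nn j) = - (V_K (to_ac (\<alpha> j) + r j) ^ 2)) \<and>
     splitting_bound M \<le> 2)"
proof -
  interpret fine_frobenius_decomp M s \<gamma> A t \<alpha> nn r B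
    using char dec by unfold_locales
  show ?thesis
    using semisimple_with_nonzero_eigenvalues eigenspace_decomposition A_determined_by_M B_determined_by_M
      quadratic_roots_and_splitting_bound
    by blast
qed

end
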